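(* Let $n\le m$ and $0<\rho<n$. Define $$\epsilon=\left\lceil\frac{(q^m-q^\rho)\left({n\brack 1}-{\rho\brack 1}\right)}{q^\rho{\rho+1\brack 1}}\right\rceil q^\rho{\rho+1\brack 1}+(q^m-q^\rho)\left({\rho\brack 1}-{n\brack 1}\right)$$ and $\delta=V_1(q^m,n)-q^{\rho-1}{\rho\brack 1}-1+2\epsilon$. If $\epsilon>0$, then $$K_{\mathrm R}(q^m,n,\rho)\ge\left\lceil\frac{q^{mn}}{V_\rho(q^m,n)-\frac{\epsilon}{\delta}N_\rho(q^m,n)}\right\rceil.$$
   Context: The rank $\mathrm{rk}(\mathbf x)$ of $\mathbf x\in\mathrm{GF}(q^m)^n$ is the maximum number of its coordinates linearly independent over $\mathrm{GF}(q)$, and $d_{\mathrm R}(\mathbf x,\mathbf y)=\mathrm{rk}(\mathbf x-\mathbf y)$. $K_{\mathrm R}(q^m,n,\rho)$ is the minimum cardinality of a code in $\mathrm{GF}(q^m)^n$ with rank covering radius $\rho$ (covering radius $=\max_{\mathbf x}\min_{\mathbf c\in C}d_{\mathrm R}(\mathbf x,\mathbf c)$). $N_u(q^m,n)={n\brack u}\alpha(m,u)$ is the number of vectors of rank $u$ in $\mathrm{GF}(q^m)^n$ and $V_r(q^m,n)=\sum_{u=0}^r N_u(q^m,n)$, where $\alpha(m,0)=1$, $\alpha(m,u)=\prod_{i=0}^{u-1}(q^m-q^i)$ and ${n\brack u}=\alpha(n,u)/\alpha(u,u)$. *)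

theory Defs
  imports Complex_Main "HOL-Library.FuncSet"
begin

text \<open>The ambient field GF(q^m) is a finite field type 'k; GF(q) is a subfield F of it.\<close>

definition is_subfield :: "'k::field set \<Rightarrow> bool" where
  "is_subfield F \<longleftrightarrow> 0 \<in> F \<and> 1 \<in> F \<and>
     (\<forall>a\<in>F. \<forall>b\<in>F. a + b \<in> F \<and> a * b \<in> F) \<and>
     (\<forall>a\<in>F. - a \<in> F) \<and> (\<forall>a\<in>F. a \<noteq> 0 \<longrightarrow> inverse a \<in> F)"

definition vecs :: "nat \<Rightarrow> (nat \<Rightarrow> 'k) set" where
  "vecs n = {..<n} \<rightarrow>\<^sub>E (UNIV :: 'k set)"

definition lin_indep_over :: "'k::field set \<Rightarrow> (nat \<Rightarrow> 'k) \<Rightarrow> nat set \<Rightarrow> bool" where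
  "lin_indep_over F x I \<longleftrightarrow>
     (\<forall>c. (\<forall>i\<in>I. c i \<in> F) \<longrightarrow> (\<Sum>i\<in>I. c i * x i) = 0 \<longrightarrow> (\<forall>i\<in>I. c i = 0))"

definition rk :: "'k::field set \<Rightarrow> nat \<Rightarrow> (nat \<Rightarrow> 'k) \<Rightarrow> nat" where
  "rk F n x = Max {card I | I. I \<subseteq> {..<n} \<and> lin_indep_over F x I}"

definition rank_dist :: "'k::field set \<Rightarrow> nat \<Rightarrow> (nat \<Rightarrow> 'k) \<Rightarrow> (nat \<Rightarrow> 'k) \<Rightarrow> nat" where
  "rank_dist F n x y = rk F n (\<lambda>i. x i - y i)"

definition rank_cov_radius :: "'k::field set \<Rightarrow> nat \<Rightarrow> (nat \<Rightarrow> 'k) set \<Rightarrow> nat" where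
  "rank_cov_radius F n C = Max {Min {rank_dist F n x c | c. c \<in> C} | x. x \<in> vecs n}"

definition K_R :: "'k::field set \<Rightarrow> nat \<Rightarrow> nat \<Rightarrow> nat" where
  "K_R F n \<rho> = (LEAST k. \<exists>C. C \<subseteq> vecs n \<and> C \<noteq> {} \<and> card C = k \<and> rank_cov_radius F n C = \<rho>)"

definition alpha :: "nat \<Rightarrow> nat \<Rightarrow> nat \<Rightarrow> nat" where
  "alpha q m u = (\<Prod>i<u. q ^ m - q ^ i)"

definition gbinom :: "nat \<Rightarrow> nat \<Rightarrow> nat \<Rightarrow> nat" where
  "gbinom q n u = alpha q n u div alpha q u u"

definition N_R :: "nat \<Rightarrow> nat \<Rightarrow> nat \<Rightarrow> nat \<Rightarrow> nat" where
  "N_R q m n u = gbinom q n u * alpha q m u"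

definition V_R :: "nat \<Rightarrow> nat \<Rightarrow> nat \<Rightarrow> nat \<Rightarrow> nat" where
  "V_R q m n r = (\<Sum>u\<le>r. N_R q m n u)"

definition eps8 :: "nat \<Rightarrow> nat \<Rightarrow> nat \<Rightarrow> nat \<Rightarrow> real" where
  "eps8 q m n \<rho> =
     real_of_int \<lceil>((real q ^ m - real q ^ \<rho>) * (real (gbinom q n 1) - real (gbinom q \<rho> 1)))
                  / (real q ^ \<rho> * real (gbinom q (\<rho> + 1) 1))\<rceil>
       * (real q ^ \<rho> * real (gbinom q (\<rho> + 1) 1))
     + (real q ^ m - real q ^ \<rho>) * (real (gbinom q \<rho> 1) - real (gbinom q n 1))"

definition delta8 :: "nat \<Rightarrow> nat \<Rightarrow> nat \<Rightarrow> nat \<Rightarrow> real" where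
  "delta8 q m n \<rho> = real (V_R q m n 1) - real q ^ (\<rho> - 1) * real (gbinom q \<rho> 1) - 1
     + 2 * eps8 q m n \<rho>"

end

theory Submission
  imports Defs
begin

text \<open>
  Let \<open>C\<close> be a code of covering radius \<open>\<rho>\<close>, and let the excess of a vector be the number of
  codewords within distance \<open>\<rho>\<close> of it, minus one; the total excess \<open>E\<close> is \<open>|C| V\<^sub>\<rho> - q\<^sup>m\<^sup>n\<close>.
  Let \<open>Z\<close> be the set of vectors that are covered exactly once, by a codeword at distance exactly
  \<open>\<rho>\<close>. Counting the pairs \<open>(x, c)\<close> with \<open>d(x, c) = \<rho>\<close> gives \<open>|C| N\<^sub>\<rho> \<le> |Z| + 2 E\<close>.

  Write \<open>[k] = (q\<^sup>k - 1) / (q - 1)\<close>. Around \<open>z \<in> Z\<close> with codeword \<open>c\<^sub>0\<close>, the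
  \<open>(q\<^sup>m - q\<^sup>\<rho>)([n] - [\<rho>])\<close> neighbours of \<open>z\<close> at distance \<open>\<rho> + 1\<close> from \<open>c\<^sub>0\<close> must be
  covered by other codewords; each of these is at distance \<open>\<rho> + 1\<close> from \<open>z\<close> and covers exactly
  \<open>q\<^sup>\<rho> [\<rho> + 1]\<close> neighbours of \<open>z\<close>, so the excess in the unit ball around \<open>z\<close> is at least
  \<open>\<epsilon>\<close>. A vector \<open>y\<close> of positive excess has at most
  \<open>\<delta> - 2 \<epsilon> = V\<^sub>1 - q\<^sup>\<rho>\<^sup>-\<^sup>1 [\<rho>] - 1\<close> points of \<open>Z\<close> in its unit ball, since
  neither \<open>y\<close> nor the points at distance \<open>\<rho> - 1\<close> from a codeword at distance \<open>\<rho>\<close> from \<open>y\<close>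
  can belong to \<open>Z\<close>. Double counting gives
  \<open>\<epsilon> |Z| \<le> (\<delta> - 2 \<epsilon>) E\<close>, and eliminating \<open>|Z|\<close> yields \<open>q\<^sup>m\<^sup>n \<le> |C| (V\<^sub>\<rho> - \<epsilon> / \<delta> N\<^sub>\<rho>)\<close>.

  These neighbour counts come from adding rank-one vectors \<open>l v\<close> (\<open>l \<in> GF(q\<^sup>m)\<close>,
  \<open>v \<in> GF(q)\<^sup>n\<close>) to a vector \<open>z\<close>: the rank goes up iff \<open>l\<close> is outside the span of the
  coordinates of \<open>z\<close> and \<open>v\<close> is outside the row space of \<open>z\<close>, and it goes down iff \<open>v\<close> is in
  the row space, \<open>l\<close> is a nonzero element of the span, and the functional \<open>z\<^sub>i \<mapsto> v\<^sub>i\<close>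
  takes the value \<open>-1\<close> at \<open>l\<close>.
\<close>

section \<open>Gaussian binomial coefficients\<close>

fun qbinom :: "nat \<Rightarrow> nat \<Rightarrow> nat \<Rightarrow> nat" where
  "qbinom q n 0 = 1"
| "qbinom q 0 (Suc u) = 0"
| "qbinom q (Suc n) (Suc u) = q ^ Suc u * qbinom q n (Suc u) + qbinom q n u"

lemma alpha_Suc: "alpha q n (Suc u) = alpha q n u * (q ^ n - q ^ u)"
  unfolding alpha_def by simp

lemma alpha_Suc_Suc: "alpha q (Suc n) (Suc u) = (q ^ Suc n - 1) * q ^ u * alpha q n u"
proof -
  have "alpha q (Suc n) (Suc u) = (q ^ Suc n - q ^ 0) * (\<Prod>i<u. q ^ Suc n - q ^ Suc i)"
    unfolding alpha_def by (rule prod.lessThan_Suc_shift)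
  also have "(\<Prod>i<u. q ^ Suc n - q ^ Suc i) = (\<Prod>i<u. q * (q ^ n - q ^ i))"
    by (simp add: right_diff_distrib')
  also have "\<dots> = q ^ u * alpha q n u" unfolding alpha_def by (simp add: prod.distrib)
  finally show ?thesis by simp
qed

lemma alpha_eq_0: "n < u \<Longrightarrow> alpha q n u = 0"
  unfolding alpha_def by (rule prod_zero) auto

lemma alpha_self_pos: "q \<ge> 2 \<Longrightarrow> alpha q u u > 0"
  unfolding alpha_def by (rule prod_pos) (auto simp: power_strict_increasing)

lemma qbinom_mult_alpha: "q \<ge> 1 \<Longrightarrow> qbinom q n u * alpha q u u = alpha q n u"
proof (induction n arbitrary: u)
  case 0
  then show ?case by (cases u) (auto simp: alpha_def prod_zero)
next
  case (Suc n)
  show ?case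
  proof (cases u)
    case 0 then show ?thesis by (simp add: alpha_def)
  next
    case (Suc w)
    have "qbinom q (Suc n) (Suc w) * alpha q (Suc w) (Suc w)
        = q ^ Suc w * (qbinom q n (Suc w) * alpha q (Suc w) (Suc w))
          + (qbinom q n w * alpha q w w) * ((q ^ Suc w - 1) * q ^ w)"
      by (simp add: alpha_Suc_Suc[of q w w] distrib_right distrib_left mult_ac)
    also have "\<dots> = q ^ Suc w * alpha q n (Suc w) + alpha q n w * ((q ^ Suc w - 1) * q ^ w)"
      using Suc.IH Suc.prems by simp
    also have "\<dots> = alpha q n w * q ^ w * (q * (q ^ n - q ^ w) + (q ^ Suc w - 1))"
      by (simp add: alpha_Suc distrib_left mult_ac)
    also have "\<dots> = alpha q (Suc n) (Suc w)"
    proof (cases "w \<le> n")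
      case True
      have "q * (q ^ n - q ^ w) = q ^ Suc n - q ^ Suc w" by (simp add: right_diff_distrib')
      moreover have "q ^ Suc w \<le> q ^ Suc n" "1 \<le> q ^ Suc w"
        using True Suc.prems by (simp_all add: power_increasing)
      ultimately have "q * (q ^ n - q ^ w) + (q ^ Suc w - 1) = q ^ Suc n - 1" by linarith
      then show ?thesis by (simp add: alpha_Suc_Suc)
    next
      case False
      then show ?thesis by (simp add: alpha_eq_0 alpha_Suc_Suc)
    qed
    finally show ?thesis using Suc by simp
  qed
qed

lemma gbinom_eq_qbinom: "q \<ge> 2 \<Longrightarrow> gbinom q n u = qbinom q n u"
  using qbinom_mult_alpha[of q n u, symmetric] alpha_self_pos[of q u] by (simp add: gbinom_def)

lemma qbinom_1_mult: "qbinom q n 1 * (q - 1) = q ^ n - 1"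
proof (induction n)
  case 0 then show ?case by simp
next
  case (Suc n)
  have "qbinom q (Suc n) 1 * (q - 1) = q * (qbinom q n 1 * (q - 1)) + (q - 1)"
    by (simp add: algebra_simps)
  also have "\<dots> = q * (q ^ n - 1) + (q - 1)" using Suc by simp
  also have "\<dots> = q ^ Suc n - 1"
  proof (cases "q = 0")
    case False
    have "q * (q ^ n - 1) = q ^ Suc n - q" by (simp add: right_diff_distrib')
    moreover have "q \<le> q ^ Suc n" using False by (simp add: Suc_leI)
    ultimately show ?thesis using False by linarith
  qed simp
  finally show ?case .
qed

lemma gbinom_1_real:
  assumes "q \<ge> 2" shows "real (gbinom q k 1) * (real q - 1) = real q ^ k - 1"
proof -
  have "real (gbinom q k 1 * (q - 1)) = real (q ^ k - 1)"
    using qbinom_1_mult[of q k] gbinom_eq_qbinom[OF assms] by simp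
  moreover have "q \<ge> 1" "q ^ k \<ge> 1" using assms by simp_all
  ultimately show ?thesis by (simp add: of_nat_diff)
qed

lemma qbinom_1_mono: "q \<ge> 1 \<Longrightarrow> k \<le> n \<Longrightarrow> qbinom q k 1 \<le> qbinom q n 1"
proof (induction n)
  case (Suc n)
  have "qbinom q n 1 \<le> q * qbinom q n 1" using Suc.prems(1) by simp
  moreover have "qbinom q (Suc n) 1 = q * qbinom q n 1 + 1" by simp
  ultimately have "qbinom q n 1 \<le> qbinom q (Suc n) 1" by linarith
  then show ?case using Suc by (cases "k = Suc n") auto
qed simp

lemma gbinom_1_pos: "q \<ge> 2 \<Longrightarrow> 0 < k \<Longrightarrow> 0 < gbinom q k 1"
  by (cases k) (simp_all add: gbinom_eq_qbinom)

lemma finite_vecs: "finite (vecs n :: (nat \<Rightarrow> 'k::finite) set)"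
  unfolding vecs_def by (rule finite_PiE) auto

lemma card_vecs: "card (vecs n :: (nat \<Rightarrow> 'k::finite) set) = card (UNIV :: 'k set) ^ n"
  unfolding vecs_def by (simp add: card_PiE)

lemma vecs_outside: "x \<in> vecs n \<Longrightarrow> \<not> i < n \<Longrightarrow> x i = undefined"
  unfolding vecs_def using PiE_arb[of x "{..<n}" "\<lambda>_. UNIV" i] by simp

lemma card_vecs_Suc_filter:
  "card {x \<in> (vecs (Suc n) :: (nat \<Rightarrow> 'k::finite) set). P x} = (\<Sum>y\<in>vecs n. card {t. P (y(n := t))})"
proof -
  let ?ext = "\<lambda>(y, t). y(n := t)" and ?S = "SIGMA y:vecs n. {t. P (y(n := t))}"
  have split: "x = (restrict x {..<n})(n := x n)" if "x \<in> vecs (Suc n)" for x :: "nat \<Rightarrow> 'k"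
  proof
    fix i show "x i = ((restrict x {..<n})(n := x n)) i"
    proof (cases "i < Suc n")
      case False then show ?thesis using vecs_outside[OF that False] by simp
    qed auto
  qed
  have "{x \<in> vecs (Suc n). P x} = ?ext ` ?S"
  proof
    show "{x \<in> vecs (Suc n). P x} \<subseteq> ?ext ` ?S"
    proof clarify
      fix x :: "nat \<Rightarrow> 'k" assume x: "x \<in> vecs (Suc n)" "P x"
      have "P ((restrict x {..<n})(n := x n))" using x(2) by (simp only: split[OF x(1), symmetric])
      then have "(restrict x {..<n}, x n) \<in> ?S" by (simp add: vecs_def)
      then show "x \<in> ?ext ` ?S" by (rule image_eqI[rotated]) (simp add: split[OF x(1), symmetric])
    qed
    show "?ext ` ?S \<subseteq> {x \<in> vecs (Suc n). P x}"
    proof clarsimp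
      fix y :: "nat \<Rightarrow> 'k" and t assume "y \<in> vecs n"
      then have "\<forall>i. i \<notin> {..<n} \<longrightarrow> y i = undefined"
        unfolding vecs_def PiE_iff extensional_def by blast
      then show "y(n := t) \<in> vecs (Suc n)" unfolding vecs_def PiE_iff extensional_def by auto
    qed
  qed
  moreover have "inj_on ?ext ?S"
  proof (rule inj_onI, clarsimp)
    fix y y' :: "nat \<Rightarrow> 'k" and t t' assume h: "y \<in> vecs n" "y' \<in> vecs n" "y(n := t) = y'(n := t')"
    have "y i = y' i" for i
      using fun_cong[OF h(3), of i] vecs_outside[OF h(1), of n] vecs_outside[OF h(2), of n]
      by (cases "i = n") auto
    then show "y = y' \<and> t = t'" using fun_cong[OF h(3), of n] by auto
  qed
  ultimately have "card {x \<in> vecs (Suc n). P x} = card ?S" by (simp add: card_image)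
  also have "\<dots> = (\<Sum>y\<in>vecs n. card {t. P (y(n := t))})"
    by (rule card_SigmaI) (simp_all add: finite_vecs)
  finally show ?thesis .
qed

lemma card_vecs_translate:
  fixes c :: "nat \<Rightarrow> 'k::{finite,ab_group_add}"
  assumes c: "c \<in> vecs n"
  shows "card {y \<in> vecs n. P (restrict (\<lambda>i. y i - c i) {..<n})} = card {x \<in> vecs n. P x}"
proof (rule bij_betw_same_card, rule bij_betw_byWitness)
  let ?t = "\<lambda>y. restrict (\<lambda>i. y i - c i) {..<n}" and ?s = "\<lambda>x. restrict (\<lambda>i. x i + c i) {..<n}"
  have inv: "?s (?t y) = y" "?t (?s y) = y" if "y \<in> vecs n" for y
  proof -
    have "?s (?t y) i = y i \<and> ?t (?s y) i = y i" for i
      by (cases "i < n") (simp_all add: vecs_outside[OF that])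
    then show "?s (?t y) = y" "?t (?s y) = y" by auto
  qed
  show "\<forall>y\<in>{y \<in> vecs n. P (?t y)}. ?s (?t y) = y" "\<forall>x\<in>{x \<in> vecs n. P x}. ?t (?s x) = x"
    using inv by simp_all
  show "?t ` {y \<in> vecs n. P (?t y)} \<subseteq> {x \<in> vecs n. P x}"
  proof (rule image_subsetI)
    fix y :: "nat \<Rightarrow> 'k" assume "y \<in> {y \<in> vecs n. P (?t y)}"
    then show "?t y \<in> {x \<in> vecs n. P x}" by (simp add: vecs_def)
  qed
  show "?s ` {x \<in> vecs n. P x} \<subseteq> {y \<in> vecs n. P (?t y)}"
  proof (rule image_subsetI)
    fix x :: "nat \<Rightarrow> 'k" assume "x \<in> {x \<in> vecs n. P x}"
    then show "?s x \<in> {y \<in> vecs n. P (?t y)}" using inv(2) by (simp add: vecs_def)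
  qed
qed

lemma card_eq_sum_card_fibres:
  assumes "finite A" "finite B" "f ` A \<subseteq> B"
  shows "card A = (\<Sum>y\<in>B. card {x\<in>A. f x = y})"
proof -
  have "A = (\<Union>y\<in>B. {x\<in>A. f x = y})" using assms by auto
  also have "card \<dots> = (\<Sum>y\<in>B. card {x\<in>A. f x = y})"
    using assms by (subst card_UN_disjoint) auto
  finally show ?thesis .
qed

section \<open>Span and rank over a subfield\<close>

locale finite_subfield =
  fixes F :: "'k::{finite,field} set"
  assumes subfield: "is_subfield F"
begin

abbreviation q where "q \<equiv> card F"

lemma F_zero: "0 \<in> F" and F_one: "1 \<in> F"
  and F_add: "a \<in> F \<Longrightarrow> b \<in> F \<Longrightarrow> a + b \<in> F"
  and F_mult: "a \<in> F \<Longrightarrow> b \<in> F \<Longrightarrow> a * b \<in> F"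
  and F_uminus: "a \<in> F \<Longrightarrow> - a \<in> F"
  and F_inverse: "a \<in> F \<Longrightarrow> inverse a \<in> F"
  using subfield unfolding is_subfield_def by (auto simp del: inverse_eq_divide)

lemma F_diff: "a \<in> F \<Longrightarrow> b \<in> F \<Longrightarrow> a - b \<in> F"
  using F_add[of a "-b"] F_uminus[of b] by simp

lemma F_divide: "a \<in> F \<Longrightarrow> b \<in> F \<Longrightarrow> a / b \<in> F"
  using F_mult[of a "inverse b"] F_inverse[of b] by (simp add: divide_inverse)

lemma F_sum: "(\<And>i. i \<in> A \<Longrightarrow> f i \<in> F) \<Longrightarrow> sum f A \<in> F"
  by (induction A rule: infinite_finite_induct) (auto intro: F_zero F_add)

lemma card_F_ge_2: "q \<ge> 2"
  using card_mono[of F "{0, 1}"] F_zero F_one by simp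

definition F_span :: "nat set \<Rightarrow> (nat \<Rightarrow> 'k) \<Rightarrow> 'k set" where
  "F_span A x = {s. \<exists>c. (\<forall>i\<in>A. c i \<in> F) \<and> s = (\<Sum>i\<in>A. c i * x i)}"

definition F_subspace :: "'k set \<Rightarrow> bool" where
  "F_subspace S \<longleftrightarrow> 0 \<in> S \<and> (\<forall>a\<in>S. \<forall>b\<in>S. a + b \<in> S) \<and> (\<forall>t\<in>F. \<forall>a\<in>S. t * a \<in> S)"

lemma F_subspace_zero: "F_subspace S \<Longrightarrow> 0 \<in> S"
  and F_subspace_add: "F_subspace S \<Longrightarrow> a \<in> S \<Longrightarrow> b \<in> S \<Longrightarrow> a + b \<in> S"
  and F_subspace_smult: "F_subspace S \<Longrightarrow> t \<in> F \<Longrightarrow> a \<in> S \<Longrightarrow> t * a \<in> S"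
  unfolding F_subspace_def by blast+

lemma F_subspace_diff: "F_subspace S \<Longrightarrow> a \<in> S \<Longrightarrow> b \<in> S \<Longrightarrow> a - b \<in> S"
  using F_subspace_add[of S a "(- 1) * b"] F_subspace_smult[of S "- 1" b] F_uminus[OF F_one] by simp

lemma F_subspace_lincomb:
  "F_subspace S \<Longrightarrow> (\<And>i. i \<in> A \<Longrightarrow> x i \<in> S) \<Longrightarrow> (\<And>i. i \<in> A \<Longrightarrow> c i \<in> F)
   \<Longrightarrow> (\<Sum>i\<in>A. c i * x i) \<in> S"
  by (induction A rule: infinite_finite_induct) (auto intro: F_subspace_zero F_subspace_add F_subspace_smult)

lemma F_span_least: "F_subspace S \<Longrightarrow> (\<And>i. i \<in> A \<Longrightarrow> x i \<in> S) \<Longrightarrow> F_span A x \<subseteq> S"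
  unfolding F_span_def using F_subspace_lincomb by blast

lemma F_span_lincomb: "(\<And>i. i \<in> A \<Longrightarrow> c i \<in> F) \<Longrightarrow> (\<Sum>i\<in>A. c i * x i) \<in> F_span A x"
  unfolding F_span_def by blast

lemma F_spanE:
  assumes "s \<in> F_span A x"
  obtains c where "\<And>i. i \<in> A \<Longrightarrow> c i \<in> F" "s = (\<Sum>i\<in>A. c i * x i)"
proof -
  from assms obtain c where "\<forall>i\<in>A. c i \<in> F" "s = (\<Sum>i\<in>A. c i * x i)"
    unfolding F_span_def by blast
  then show thesis using that by blast
qed

lemma F_subspace_F_span: "F_subspace (F_span A x)"
  unfolding F_subspace_def
proof (intro conjI ballI)
  show "0 \<in> F_span A x" using F_span_lincomb[of A "\<lambda>_. 0" x] F_zero by simp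
next
  fix a b assume "a \<in> F_span A x" "b \<in> F_span A x"
  then obtain c d where "\<And>i. i \<in> A \<Longrightarrow> c i \<in> F" "a = (\<Sum>i\<in>A. c i * x i)"
      "\<And>i. i \<in> A \<Longrightarrow> d i \<in> F" "b = (\<Sum>i\<in>A. d i * x i)" by (metis F_spanE)
  then show "a + b \<in> F_span A x"
    using F_span_lincomb[of A "\<lambda>i. c i + d i" x] by (simp add: F_add sum.distrib distrib_right)
next
  fix t a assume "t \<in> F" "a \<in> F_span A x"
  then obtain c where "\<And>i. i \<in> A \<Longrightarrow> c i \<in> F" "a = (\<Sum>i\<in>A. c i * x i)" by (metis F_spanE)
  then show "t * a \<in> F_span A x" using \<open>t \<in> F\<close> F_span_lincomb[of A "\<lambda>i. t * c i" x]
    by (simp add: F_mult sum_distrib_left mult.assoc)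
qed

lemma F_span_base:
  assumes "finite A" "j \<in> A" shows "x j \<in> F_span A x"
proof -
  have "(\<Sum>i\<in>A. (if i = j then 1 else 0) * x i) = (\<Sum>i\<in>A. if i = j then x i else 0)"
    by (rule sum.cong) auto
  also have "\<dots> = x j" using assms by simp
  finally show ?thesis using F_span_lincomb[of A "\<lambda>i. if i = j then 1 else 0" x] F_zero F_one
    by simp
qed

lemma F_span_cong: "(\<And>i. i \<in> A \<Longrightarrow> x i = y i) \<Longrightarrow> F_span A x = F_span A y"
  unfolding F_span_def by (metis (no_types, lifting) sum.cong)

lemma lin_indep_overD:
  "lin_indep_over F x I \<Longrightarrow> \<forall>i\<in>I. c i \<in> F \<Longrightarrow> (\<Sum>i\<in>I. c i * x i) = 0 \<Longrightarrow> i \<in> I \<Longrightarrow> c i = 0"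
  unfolding lin_indep_over_def by blast

lemma card_F_span_indep:
  assumes "finite A" "lin_indep_over F x A"
  shows "card (F_span A x) = q ^ card A"
proof -
  have img: "F_span A x = (\<lambda>c. \<Sum>i\<in>A. c i * x i) ` (A \<rightarrow>\<^sub>E F)"
  proof
    show "F_span A x \<subseteq> (\<lambda>c. \<Sum>i\<in>A. c i * x i) ` (A \<rightarrow>\<^sub>E F)"
    proof
      fix s assume "s \<in> F_span A x"
      then obtain c where c: "\<And>i. i \<in> A \<Longrightarrow> c i \<in> F" "s = (\<Sum>i\<in>A. c i * x i)" by (rule F_spanE) blast
      then have "s = (\<Sum>i\<in>A. restrict c A i * x i)" by simp
      moreover have "restrict c A \<in> A \<rightarrow>\<^sub>E F" using c by auto
      ultimately show "s \<in> (\<lambda>c. \<Sum>i\<in>A. c i * x i) ` (A \<rightarrow>\<^sub>E F)" by blast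
    qed
    show "(\<lambda>c. \<Sum>i\<in>A. c i * x i) ` (A \<rightarrow>\<^sub>E F) \<subseteq> F_span A x"
      by (auto intro: F_span_lincomb)
  qed
  have "inj_on (\<lambda>c. \<Sum>i\<in>A. c i * x i) (A \<rightarrow>\<^sub>E F)"
  proof (rule inj_onI)
    fix c d assume c: "c \<in> A \<rightarrow>\<^sub>E F" and d: "d \<in> A \<rightarrow>\<^sub>E F"
      and eq: "(\<Sum>i\<in>A. c i * x i) = (\<Sum>i\<in>A. d i * x i)"
    have "(\<Sum>i\<in>A. (c i - d i) * x i) = 0" using eq by (simp add: left_diff_distrib sum_subtractf)
    moreover have "\<forall>i\<in>A. c i - d i \<in> F" using c d by (auto intro: F_diff)
    ultimately have "\<forall>i\<in>A. c i - d i = 0" using lin_indep_overD[OF assms(2), of "\<lambda>i. c i - d i"] by blast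
    then show "c = d" using c d by (intro PiE_ext[OF c d]) auto
  qed
  from card_image[OF this] show ?thesis using assms(1) by (simp add: img card_PiE)
qed

lemma card_subspace_plus_line:
  assumes "F_subspace S" "l \<notin> S"
  shows "card {s + t * l | s t. s \<in> S \<and> t \<in> F} = card S * q"
proof -
  have "{s + t * l | s t. s \<in> S \<and> t \<in> F} = (\<lambda>(s,t). s + t * l) ` (S \<times> F)" by auto
  moreover have "inj_on (\<lambda>(s,t). s + t * l) (S \<times> F)"
  proof (rule inj_onI, clarsimp)
    fix s t s' t' assume h: "s \<in> S" "t \<in> F" "s' \<in> S" "t' \<in> F" "s + t * l = s' + t' * l"
    show "s = s' \<and> t = t'"
    proof (cases "t = t'")
      case False
      have "l = (1 / (t - t')) * (s' - s)" using h(5) False by (simp add: field_simps)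
      moreover have "1 / (t - t') \<in> F" using h by (intro F_divide F_one F_diff)
      ultimately have "l \<in> S" using F_subspace_diff[OF assms(1) h(3) h(1)] F_subspace_smult[OF assms(1)] by metis
      then show ?thesis using assms by simp
    qed (use h in simp)
  qed
  ultimately show ?thesis by (simp add: card_image card_cartesian_product)
qed

lemma subspace_plus_line_eq:
  assumes "F_subspace S" "l \<in> S"
  shows "{s + t * l | s t. s \<in> S \<and> t \<in> F} = S"
proof
  show "{s + t * l | s t. s \<in> S \<and> t \<in> F} \<subseteq> S"
    using assms by (auto intro: F_subspace_add F_subspace_smult)
  show "S \<subseteq> {s + t * l | s t. s \<in> S \<and> t \<in> F}"
  proof
    fix x assume "x \<in> S"
    then have "x = x + 0 * l \<and> x \<in> S \<and> 0 \<in> F" using F_zero by simp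
    then show "x \<in> {s + t * l | s t. s \<in> S \<and> t \<in> F}" by blast
  qed
qed

abbreviation coord_span :: "nat \<Rightarrow> (nat \<Rightarrow> 'k) \<Rightarrow> 'k set" where
  "coord_span n x \<equiv> F_span {..<n} x"

lemma zero_in_coord_span: "0 \<in> coord_span n z"
  by (rule F_subspace_zero[OF F_subspace_F_span])

lemma finite_indep_cards: "finite {card I | I. I \<subseteq> {..<n} \<and> lin_indep_over F x I}"
  by (rule finite_subset[of _ "{..n}"]) (use card_mono[of "{..<n}"] in fastforce)+

lemma rank_basis_exists: "\<exists>I. I \<subseteq> {..<n} \<and> lin_indep_over F x I \<and> card I = rk F n x"
proof -
  have "lin_indep_over F x {}" unfolding lin_indep_over_def by simp
  then have "{card I | I. I \<subseteq> {..<n} \<and> lin_indep_over F x I} \<noteq> {}" by blast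
  from Max_in[OF finite_indep_cards this] show ?thesis unfolding rk_def by auto
qed

lemma card_indep_le_rk: "I \<subseteq> {..<n} \<Longrightarrow> lin_indep_over F x I \<Longrightarrow> card I \<le> rk F n x"
  unfolding rk_def by (rule Max_ge[OF finite_indep_cards]) blast

lemma F_span_rank_basis:
  assumes I: "I \<subseteq> {..<n}" "lin_indep_over F x I" "card I = rk F n x"
  shows "F_span I x = coord_span n x"
proof
  have fI: "finite I" using I(1) finite_subset by blast
  show "F_span I x \<subseteq> coord_span n x"
    by (rule F_span_least[OF F_subspace_F_span]) (use I(1) in \<open>auto intro: F_span_base\<close>)
  show "coord_span n x \<subseteq> F_span I x"
  proof (rule F_span_least[OF F_subspace_F_span])
    fix j assume j: "j \<in> {..<n}"
    show "x j \<in> F_span I x"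
    proof (cases "j \<in> I")
      case True then show ?thesis using fI F_span_base by blast
    next
      case False
      have "card (insert j I) = rk F n x + 1" using False fI I(3) by simp
      then have "\<not> lin_indep_over F x (insert j I)"
        using card_indep_le_rk[of "insert j I" n x] I(1) j by auto
      then obtain c where c: "\<forall>i\<in>insert j I. c i \<in> F" "(\<Sum>i\<in>insert j I. c i * x i) = 0"
          "\<exists>i\<in>insert j I. c i \<noteq> 0"
        unfolding lin_indep_over_def by blast
      have sum: "c j * x j + (\<Sum>i\<in>I. c i * x i) = 0" using c(2) False fI by simp
      have cj: "c j \<noteq> 0"
      proof
        assume "c j = 0"
        then have "\<forall>i\<in>I. c i = 0" using sum lin_indep_overD[OF I(2)] c(1) by simp
        then show False using c(3) \<open>c j = 0\<close> by auto
      qed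
      have "(\<Sum>i\<in>I. (- c i / c j) * x i) = - (\<Sum>i\<in>I. c i * x i) / c j"
        by (simp add: sum_divide_distrib sum_negf[symmetric])
      also have "\<dots> = x j"
      proof -
        have "(\<Sum>i\<in>I. c i * x i) = - (c j * x j)" using sum by (simp add: eq_neg_iff_add_eq_0 add.commute)
        then show ?thesis using cj by simp
      qed
      finally show ?thesis using F_span_lincomb[of I "\<lambda>i. - c i / c j" x] c(1)
        by (auto intro!: F_divide F_uminus)
    qed
  qed
qed

lemma card_coord_span: "card (coord_span n x) = q ^ rk F n x"
proof -
  obtain I where I: "I \<subseteq> {..<n}" "lin_indep_over F x I" "card I = rk F n x"
    using rank_basis_exists by blast
  then have "finite I" using finite_subset by blast
  then show ?thesis using card_F_span_indep[OF _ I(2)] F_span_rank_basis[OF I] I(3) by simp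
qed

lemma rk_eq_iff_card: "rk F n x = r \<longleftrightarrow> card (coord_span n x) = q ^ r"
  using card_coord_span card_F_ge_2 by (simp add: power_inject_exp)

lemma rk_le_iff_card: "rk F n x \<le> r \<longleftrightarrow> card (coord_span n x) \<le> q ^ r"
  using card_coord_span card_F_ge_2 by (simp add: power_increasing_iff)

lemma rk_less_iff_card: "rk F n x < r \<longleftrightarrow> card (coord_span n x) < q ^ r"
  using card_coord_span card_F_ge_2 by (simp add: power_strict_increasing_iff)

lemma rk_eqI_coord_span: "coord_span n x = coord_span n y \<Longrightarrow> rk F n x = rk F n y"
  by (simp add: rk_eq_iff_card card_coord_span)

lemma rk_cong: "(\<And>i. i < n \<Longrightarrow> x i = y i) \<Longrightarrow> rk F n x = rk F n y"
  by (rule rk_eqI_coord_span, rule F_span_cong) auto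

lemma rk_add: "rk F n (\<lambda>i. x i + y i) \<le> rk F n x + rk F n y"
proof -
  have "coord_span n (\<lambda>i. x i + y i) \<subseteq> (\<lambda>(a,b). a + b) ` (coord_span n x \<times> coord_span n y)"
  proof
    fix s assume "s \<in> coord_span n (\<lambda>i. x i + y i)"
    then obtain c where c: "\<And>i. i \<in> {..<n} \<Longrightarrow> c i \<in> F" "s = (\<Sum>i<n. c i * (x i + y i))"
      by (rule F_spanE) blast
    then have "s = (\<Sum>i<n. c i * x i) + (\<Sum>i<n. c i * y i)" by (simp add: distrib_left sum.distrib)
    moreover have "(\<Sum>i<n. c i * x i) \<in> coord_span n x" "(\<Sum>i<n. c i * y i) \<in> coord_span n y"
      using c(1) by (auto intro: F_span_lincomb)
    ultimately show "s \<in> (\<lambda>(a,b). a + b) ` (coord_span n x \<times> coord_span n y)" by force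
  qed
  then have "card (coord_span n (\<lambda>i. x i + y i)) \<le> card ((\<lambda>(a,b). a + b) ` (coord_span n x \<times> coord_span n y))"
    by (rule card_mono[rotated]) simp
  also have "\<dots> \<le> card (coord_span n x \<times> coord_span n y)" by (rule card_image_le) simp
  also have "\<dots> = q ^ (rk F n x + rk F n y)"
    by (simp add: card_cartesian_product card_coord_span power_add)
  finally show ?thesis using rk_le_iff_card by blast
qed

lemma rk_smult_le:
  assumes "\<And>i. i < n \<Longrightarrow> c i \<in> F" shows "rk F n (\<lambda>i. c i * x i) \<le> rk F n x"
proof -
  have "c i * x i \<in> coord_span n x" if "i \<in> {..<n}" for i
    using that assms by (intro F_subspace_smult[OF F_subspace_F_span] F_span_base) auto
  then have "coord_span n (\<lambda>i. c i * x i) \<subseteq> coord_span n x"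
    by (intro F_span_least[OF F_subspace_F_span])
  then have "card (coord_span n (\<lambda>i. c i * x i)) \<le> card (coord_span n x)"
    by (rule card_mono[rotated]) simp
  then show ?thesis using rk_le_iff_card[of n "\<lambda>i. c i * x i" "rk F n x"] card_coord_span[of n x] by simp
qed

lemma rk_uminus: "rk F n (\<lambda>i. - x i) = rk F n x"
  using rk_smult_le[of n "\<lambda>_. - 1" x] rk_smult_le[of n "\<lambda>_. - 1" "\<lambda>i. - x i"] F_uminus[OF F_one]
  by simp

lemma rk_eq_0_iff: "rk F n x = 0 \<longleftrightarrow> (\<forall>i<n. x i = 0)"
proof
  assume "rk F n x = 0"
  then have "card (coord_span n x) = 1" using card_coord_span by simp
  then have "coord_span n x = {0}" using zero_in_coord_span by (metis card_1_singletonE singletonD)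
  then show "\<forall>i<n. x i = 0" using F_span_base[of "{..<n}" _ x] by auto
next
  assume "\<forall>i<n. x i = 0"
  then have "coord_span n x = coord_span n (\<lambda>_. 0)" by (intro F_span_cong) simp
  also have "\<dots> = {0}" unfolding F_span_def using F_zero by auto
  finally show "rk F n x = 0" using rk_eq_iff_card by simp
qed

lemma rk_le_length: "rk F n x \<le> n"
proof -
  obtain I where "I \<subseteq> {..<n}" "card I = rk F n x" using rank_basis_exists by blast
  then show ?thesis using card_mono[of "{..<n}" I] by simp
qed

lemma rank_dist_triangle: "rank_dist F n x z \<le> rank_dist F n x y + rank_dist F n y z"
  using rk_add[of n "\<lambda>i. x i - y i" "\<lambda>i. y i - z i"] by (simp add: rank_dist_def)

lemma rank_dist_commute: "rank_dist F n x y = rank_dist F n y x"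
  using rk_uminus[of n "\<lambda>i. y i - x i"] by (simp add: rank_dist_def)

lemma rank_dist_self: "rank_dist F n x x = 0"
  by (simp add: rank_dist_def rk_eq_0_iff)

section \<open>Counting vectors by rank\<close>

lemma coord_span_Suc: "coord_span (Suc n) x = {s + t * x n | s t. s \<in> coord_span n x \<and> t \<in> F}"
proof
  show "coord_span (Suc n) x \<subseteq> {s + t * x n | s t. s \<in> coord_span n x \<and> t \<in> F}"
  proof
    fix y assume "y \<in> coord_span (Suc n) x"
    then obtain c where c: "\<And>i. i \<in> {..<Suc n} \<Longrightarrow> c i \<in> F" "y = (\<Sum>i<Suc n. c i * x i)"
      by (rule F_spanE) blast
    then have "y = (\<Sum>i<n. c i * x i) + c n * x n" by simp
    moreover have "(\<Sum>i<n. c i * x i) \<in> coord_span n x" using c(1) by (intro F_span_lincomb) auto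
    ultimately show "y \<in> {s + t * x n | s t. s \<in> coord_span n x \<and> t \<in> F}" using c(1) by blast
  qed
  have "coord_span n x \<subseteq> coord_span (Suc n) x"
    by (rule F_span_least[OF F_subspace_F_span]) (auto intro: F_span_base)
  moreover have "x n \<in> coord_span (Suc n) x" by (rule F_span_base) auto
  ultimately show "{s + t * x n | s t. s \<in> coord_span n x \<and> t \<in> F} \<subseteq> coord_span (Suc n) x"
    by (auto intro: F_subspace_add[OF F_subspace_F_span] F_subspace_smult[OF F_subspace_F_span])
qed

lemma rk_Suc: "rk F (Suc n) x = (if x n \<in> coord_span n x then rk F n x else Suc (rk F n x))"
proof (cases "x n \<in> coord_span n x")
  case True
  then have "coord_span (Suc n) x = coord_span n x"
    using coord_span_Suc subspace_plus_line_eq[OF F_subspace_F_span] by simp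
  then show ?thesis using True card_coord_span[of "Suc n" x] card_coord_span[of n x] card_F_ge_2
    by (simp add: power_inject_exp)
next
  case False
  then have "card (coord_span (Suc n) x) = card (coord_span n x) * q"
    using coord_span_Suc card_subspace_plus_line[OF F_subspace_F_span] by simp
  then show ?thesis using False card_coord_span rk_eq_iff_card by simp
qed

lemma card_rank_dist_filter:
  assumes "c \<in> vecs n"
  shows "card {y \<in> vecs n. P (rank_dist F n y c)} = card {x \<in> vecs n. P (rk F n x)}"
proof -
  have "rank_dist F n y c = rk F n (restrict (\<lambda>i. y i - c i) {..<n})" for y
    unfolding rank_dist_def by (rule rk_cong) simp
  then show ?thesis using card_vecs_translate[OF assms, of "\<lambda>x. P (rk F n x)"] by simp
qed

lemma card_rank_dist_pair_filter:
  assumes "z \<in> vecs n"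
  shows "card {y \<in> vecs n. rank_dist F n y z \<le> 1 \<and> rank_dist F n y c = R}
       = card {e \<in> vecs n. rk F n e \<le> 1 \<and> rk F n (\<lambda>i. (z i - c i) + e i) = R}"
proof -
  have "rank_dist F n y c = rk F n (\<lambda>i. (z i - c i) + restrict (\<lambda>i. y i - z i) {..<n} i)"
    and "rank_dist F n y z = rk F n (restrict (\<lambda>i. y i - z i) {..<n})" for y
    unfolding rank_dist_def by (rule rk_cong, simp)+
  then show ?thesis
    using card_vecs_translate[OF assms, of "\<lambda>e. rk F n e \<le> 1 \<and> rk F n (\<lambda>i. (z i - c i) + e i) = R"]
    by simp
qed

end

locale finite_field_extension = finite_subfield F for F :: "'k::{finite,field} set" +
  fixes m :: nat
  assumes card_UNIV: "card (UNIV :: 'k set) = card F ^ m"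
begin

lemma card_rk_Suc_update:
  "card {t. rk F (Suc n) (y(n := t)) = u} =
     (if rk F n y = u then q ^ u else 0) + (if Suc (rk F n y) = u then q ^ m - q ^ rk F n y else 0)"
proof -
  have "coord_span n (y(n := t)) = coord_span n y" for t by (rule F_span_cong) auto
  moreover have "rk F n (y(n := t)) = rk F n y" for t by (rule rk_cong) auto
  ultimately have "{t. rk F (Suc n) (y(n := t)) = u} =
      {t. t \<in> coord_span n y \<and> rk F n y = u} \<union> {t. t \<notin> coord_span n y \<and> Suc (rk F n y) = u}"
    using rk_Suc[of n "y(n := _)"] by auto
  moreover have "card {t. t \<in> coord_span n y \<and> rk F n y = u} = (if rk F n y = u then q ^ u else 0)"
    using card_coord_span[of n y] by auto
  moreover have "card {t. t \<notin> coord_span n y \<and> Suc (rk F n y) = u}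
      = (if Suc (rk F n y) = u then q ^ m - q ^ rk F n y else 0)"
  proof -
    have "{t. t \<notin> coord_span n y} = UNIV - coord_span n y" by auto
    then have "card {t. t \<notin> coord_span n y} = q ^ m - q ^ rk F n y"
      using card_Diff_subset[of "coord_span n y" UNIV] card_UNIV card_coord_span[of n y] by simp
    then show ?thesis by auto
  qed
  moreover have "{t. t \<in> coord_span n y \<and> rk F n y = u} \<inter> {t. t \<notin> coord_span n y \<and> Suc (rk F n y) = u} = {}"
    by auto
  ultimately show ?thesis by (simp only: card_Un_disjoint finite)
qed

lemma card_rank_eq_qbinom: "card {x \<in> vecs n. rk F n x = u} = qbinom q n u * alpha q m u"
proof (induction n arbitrary: u)
  case 0
  have "vecs 0 = {(\<lambda>_. undefined) :: nat \<Rightarrow> 'k}" unfolding vecs_def by auto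
  moreover have "rk F 0 x = 0" for x using rk_le_length[of 0 x] by simp
  ultimately show ?case by (cases u) (auto simp: alpha_def)
next
  case (Suc n)
  let ?N = "\<lambda>u. card {x \<in> vecs n. rk F n x = u}"
  have "card {x \<in> vecs (Suc n). rk F (Suc n) x = u}
      = (\<Sum>y\<in>vecs n. if rk F n y = u then q ^ u else 0)
        + (\<Sum>y\<in>vecs n. if Suc (rk F n y) = u then q ^ m - q ^ rk F n y else 0)"
    by (simp add: card_vecs_Suc_filter card_rk_Suc_update sum.distrib)
  also have "(\<Sum>y\<in>vecs n. if rk F n y = u then q ^ u else 0) = q ^ u * ?N u"
    by (simp add: sum.If_cases finite_vecs Int_def)
  also have "(\<Sum>y\<in>vecs n. if Suc (rk F n y) = u then q ^ m - q ^ rk F n y else 0)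
      = (case u of 0 \<Rightarrow> 0 | Suc w \<Rightarrow> (q ^ m - q ^ w) * ?N w)"
  proof (cases u)
    case (Suc w)
    then have "(\<Sum>y\<in>vecs n. if Suc (rk F n y) = u then q ^ m - q ^ rk F n y else 0)
        = (\<Sum>y\<in>vecs n. if rk F n y = w then q ^ m - q ^ w else 0)"
      by (intro sum.cong) auto
    then show ?thesis using Suc by (simp add: sum.If_cases finite_vecs Int_def)
  qed simp
  finally show ?case
    using Suc.IH by (cases u) (simp_all add: alpha_Suc distrib_left distrib_right mult_ac)
qed

lemma card_rank_eq: "card {x \<in> vecs n. rk F n x = u} = N_R q m n u"
  using card_rank_eq_qbinom gbinom_eq_qbinom[OF card_F_ge_2] by (simp add: N_R_def)

lemma card_rank_le: "card {x \<in> vecs n. rk F n x \<le> R} = V_R q m n R"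
proof (induction R)
  case 0
  then show ?case using card_rank_eq[of n 0] by (simp add: V_R_def)
next
  case (Suc R)
  have "{x \<in> vecs n. rk F n x \<le> Suc R} = {x \<in> vecs n. rk F n x \<le> R} \<union> {x \<in> vecs n. rk F n x = Suc R}"
    by auto
  moreover have "card ({x \<in> vecs n. rk F n x \<le> R} \<union> {x \<in> vecs n. rk F n x = Suc R})
     = card {x \<in> vecs n. rk F n x \<le> R} + card {x \<in> vecs n. rk F n x = Suc R}"
    by (rule card_Un_disjoint) (auto intro: finite_subset[OF _ finite_vecs])
  ultimately show ?case using Suc card_rank_eq[of n "Suc R"] by (simp add: V_R_def)
qed

end

section \<open>Adding a rank-one vector\<close>

context finite_subfield
begin

definition F_vecs :: "nat \<Rightarrow> (nat \<Rightarrow> 'k) set" where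
  "F_vecs n = {..<n} \<rightarrow>\<^sub>E F"

text \<open>Writing the coordinates of \<open>z\<close> in an \<open>F\<close>-basis of the big field turns \<open>z\<close> into a matrix over
  \<open>F\<close> with \<open>n\<close> columns; \<open>row_space n z\<close> is its row space, i.e. the vectors \<open>v \<in> F\<^sup>n\<close> satisfying every
  \<open>F\<close>-linear relation among the \<open>z\<^sub>i\<close>. Each such \<open>v\<close> defines the \<open>F\<close>-linear functional
  \<open>row_functional n z v\<close> on the span of the \<open>z\<^sub>i\<close>, mapping \<open>z\<^sub>i\<close> to \<open>v\<^sub>i\<close>.\<close>

definition row_space :: "nat \<Rightarrow> (nat \<Rightarrow> 'k) \<Rightarrow> (nat \<Rightarrow> 'k) set" where
  "row_space n z = {v \<in> F_vecs n. \<forall>c. (\<forall>i<n. c i \<in> F) \<longrightarrow> (\<Sum>i<n. c i * z i) = 0 \<longrightarrow> (\<Sum>i<n. c i * v i) = 0}"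

definition span_coeffs :: "nat \<Rightarrow> (nat \<Rightarrow> 'k) \<Rightarrow> 'k \<Rightarrow> nat \<Rightarrow> 'k" where
  "span_coeffs n z s = (SOME c. (\<forall>i<n. c i \<in> F) \<and> s = (\<Sum>i<n. c i * z i))"

definition row_functional :: "nat \<Rightarrow> (nat \<Rightarrow> 'k) \<Rightarrow> (nat \<Rightarrow> 'k) \<Rightarrow> 'k \<Rightarrow> 'k" where
  "row_functional n z v s = (\<Sum>i<n. span_coeffs n z s i * v i)"

lemma F_vecsD: "v \<in> F_vecs n \<Longrightarrow> i < n \<Longrightarrow> v i \<in> F"
  unfolding F_vecs_def by auto

lemma finite_F_vecs: "finite (F_vecs n)"
  unfolding F_vecs_def by (rule finite_PiE) auto

lemma card_F_vecs: "card (F_vecs n) = q ^ n"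
  unfolding F_vecs_def by (simp add: card_PiE)

lemma row_space_F_vecs: "row_space n z \<subseteq> F_vecs n"
  unfolding row_space_def by blast

lemma row_spaceD:
  "v \<in> row_space n z \<Longrightarrow> \<forall>i<n. c i \<in> F \<Longrightarrow> (\<Sum>i<n. c i * z i) = 0 \<Longrightarrow> (\<Sum>i<n. c i * v i) = 0"
  unfolding row_space_def by blast

lemma span_coeffs:
  assumes "s \<in> coord_span n z"
  shows "\<forall>i<n. span_coeffs n z s i \<in> F" "s = (\<Sum>i<n. span_coeffs n z s i * z i)"
proof -
  have "\<exists>c. (\<forall>i<n. c i \<in> F) \<and> s = (\<Sum>i<n. c i * z i)" using assms unfolding F_span_def by auto
  from someI_ex[OF this] show "\<forall>i<n. span_coeffs n z s i \<in> F" "s = (\<Sum>i<n. span_coeffs n z s i * z i)"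
    unfolding span_coeffs_def by blast+
qed

lemma row_functional_lincomb:
  assumes v: "v \<in> row_space n z" and c: "\<forall>i<n. c i \<in> F"
  shows "row_functional n z v (\<Sum>i<n. c i * z i) = (\<Sum>i<n. c i * v i)"
proof -
  let ?s = "\<Sum>i<n. c i * z i"
  let ?d = "span_coeffs n z ?s"
  have s: "?s \<in> coord_span n z" using c by (intro F_span_lincomb) auto
  have "(\<Sum>i<n. (?d i - c i) * z i) = 0"
    using span_coeffs(2)[OF s] by (simp add: left_diff_distrib sum_subtractf)
  then have "(\<Sum>i<n. (?d i - c i) * v i) = 0"
    using row_spaceD[OF v] span_coeffs(1)[OF s] c by (simp add: F_diff)
  then show ?thesis unfolding row_functional_def by (simp add: left_diff_distrib sum_subtractf)
qed

lemma row_functional_in_F: "v \<in> F_vecs n \<Longrightarrow> s \<in> coord_span n z \<Longrightarrow> row_functional n z v s \<in> F"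
  unfolding row_functional_def using span_coeffs(1) F_vecsD by (auto intro!: F_sum F_mult)

lemma row_functional_diff:
  assumes "v \<in> row_space n z" "s \<in> coord_span n z" "s' \<in> coord_span n z"
  shows "row_functional n z v (s - s') = row_functional n z v s - row_functional n z v s'"
proof -
  let ?c = "span_coeffs n z s" and ?d = "span_coeffs n z s'"
  have "s - s' = (\<Sum>i<n. (?c i - ?d i) * z i)"
    using span_coeffs(2)[OF assms(2)] span_coeffs(2)[OF assms(3)]
    by (simp add: left_diff_distrib sum_subtractf)
  then have "row_functional n z v (s - s') = (\<Sum>i<n. (?c i - ?d i) * v i)"
    using row_functional_lincomb[OF assms(1), of "\<lambda>i. ?c i - ?d i"]
      span_coeffs(1)[OF assms(2)] span_coeffs(1)[OF assms(3)] F_diff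
    by simp
  also have "\<dots> = row_functional n z v s - row_functional n z v s'"
    unfolding row_functional_def by (simp add: left_diff_distrib sum_subtractf)
  finally show ?thesis .
qed

lemma row_functional_smult:
  assumes "v \<in> row_space n z" "s \<in> coord_span n z" "t \<in> F"
  shows "row_functional n z v (t * s) = t * row_functional n z v s"
proof -
  let ?c = "span_coeffs n z s"
  have "t * s = t * (\<Sum>i<n. ?c i * z i)" using span_coeffs(2)[OF assms(2)] by (rule arg_cong)
  also have "\<dots> = (\<Sum>i<n. (t * ?c i) * z i)" by (simp add: sum_distrib_left mult.assoc)
  finally have "t * s = (\<Sum>i<n. (t * ?c i) * z i)" .
  then have "row_functional n z v (t * s) = (\<Sum>i<n. (t * ?c i) * v i)"
    using row_functional_lincomb[OF assms(1), of "\<lambda>i. t * ?c i"] span_coeffs(1)[OF assms(2)] F_mult assms(3)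
    by simp
  also have "\<dots> = t * row_functional n z v s"
    unfolding row_functional_def by (simp add: sum_distrib_left mult.assoc)
  finally show ?thesis .
qed

lemma rk_smult_F_vec_le_1: "v \<in> F_vecs n \<Longrightarrow> rk F n (\<lambda>i. c * v i) \<le> 1"
proof -
  assume v: "v \<in> F_vecs n"
  have "coord_span n (\<lambda>i. c * v i) \<subseteq> (\<lambda>t. c * t) ` F"
  proof
    fix s assume "s \<in> coord_span n (\<lambda>i. c * v i)"
    then obtain a where a: "\<And>i. i \<in> {..<n} \<Longrightarrow> a i \<in> F" "s = (\<Sum>i<n. a i * (c * v i))"
      by (rule F_spanE) blast
    then have "s = c * (\<Sum>i<n. a i * v i)" by (simp add: sum_distrib_left mult_ac)
    moreover have "(\<Sum>i<n. a i * v i) \<in> F" using a(1) F_vecsD[OF v] by (auto intro!: F_sum F_mult)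
    ultimately show "s \<in> (\<lambda>t. c * t) ` F" by blast
  qed
  then have "card (coord_span n (\<lambda>i. c * v i)) \<le> card ((\<lambda>t. c * t) ` F)" by (intro card_mono) auto
  also have "\<dots> \<le> q" by (rule card_image_le) simp
  finally show ?thesis using rk_le_iff_card by simp
qed

context
  fixes n :: nat and z v :: "nat \<Rightarrow> 'k" and l :: 'k
  assumes v: "v \<in> F_vecs n"
begin

lemma lincomb_rank_one_update:
  "(\<Sum>i<n. c i * (z i + l * v i)) = (\<Sum>i<n. c i * z i) + l * (\<Sum>i<n. c i * v i)"
  by (simp add: distrib_left sum.distrib sum_distrib_left mult.left_commute)

lemma coord_span_rank_one_update_subset:
  "coord_span n (\<lambda>i. z i + l * v i) \<subseteq> {s + t * l | s t. s \<in> coord_span n z \<and> t \<in> F}"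
proof
  fix w assume "w \<in> coord_span n (\<lambda>i. z i + l * v i)"
  then obtain c where c: "\<And>i. i \<in> {..<n} \<Longrightarrow> c i \<in> F" "w = (\<Sum>i<n. c i * (z i + l * v i))"
    by (rule F_spanE) blast
  then have "w = (\<Sum>i<n. c i * z i) + (\<Sum>i<n. c i * v i) * l"
    by (simp add: lincomb_rank_one_update mult.commute)
  moreover have "(\<Sum>i<n. c i * z i) \<in> coord_span n z" using c(1) by (intro F_span_lincomb) auto
  moreover have "(\<Sum>i<n. c i * v i) \<in> F" using c(1) F_vecsD[OF v] by (auto intro!: F_sum F_mult)
  ultimately show "w \<in> {s + t * l | s t. s \<in> coord_span n z \<and> t \<in> F}" by blast
qed

lemma coord_span_rank_one_update_not_row_space:
  assumes "v \<notin> row_space n z"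
  shows "coord_span n (\<lambda>i. z i + l * v i) = {s + t * l | s t. s \<in> coord_span n z \<and> t \<in> F}"
proof
  let ?y = "\<lambda>i. z i + l * v i"
  obtain c where c: "\<forall>i<n. c i \<in> F" "(\<Sum>i<n. c i * z i) = 0" "(\<Sum>i<n. c i * v i) \<noteq> 0"
    using assms v unfolding row_space_def by blast
  let ?s = "\<Sum>i<n. c i * v i"
  have "?s \<in> F" using c(1) F_vecsD[OF v] by (auto intro!: F_sum F_mult)
  have "(\<Sum>i<n. (c i / ?s) * ?y i) = l"
    using c(2,3) by (simp add: sum_divide_distrib[symmetric] lincomb_rank_one_update)
  then have l: "l \<in> coord_span n ?y"
    using F_span_lincomb[of "{..<n}" "\<lambda>i. c i / ?s" ?y] c(1) \<open>?s \<in> F\<close> F_divide by auto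
  have "z i \<in> coord_span n ?y" if "i \<in> {..<n}" for i
  proof -
    have "?y i \<in> coord_span n ?y" using that by (intro F_span_base) auto
    moreover have "v i * l \<in> coord_span n ?y"
      using l F_vecsD[OF v] that by (auto intro: F_subspace_smult[OF F_subspace_F_span])
    ultimately have "?y i - v i * l \<in> coord_span n ?y" by (rule F_subspace_diff[OF F_subspace_F_span])
    then show ?thesis by (simp add: mult.commute)
  qed
  then have "coord_span n z \<subseteq> coord_span n ?y" by (rule F_span_least[OF F_subspace_F_span])
  then show "{s + t * l | s t. s \<in> coord_span n z \<and> t \<in> F} \<subseteq> coord_span n ?y"
    using l by (auto intro: F_subspace_add[OF F_subspace_F_span] F_subspace_smult[OF F_subspace_F_span])
qed (rule coord_span_rank_one_update_subset)

lemma coord_span_rank_one_update_row_space: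
  assumes "v \<in> row_space n z"
  shows "coord_span n (\<lambda>i. z i + l * v i) = (\<lambda>s. s + l * row_functional n z v s) ` coord_span n z"
proof
  show "coord_span n (\<lambda>i. z i + l * v i) \<subseteq> (\<lambda>s. s + l * row_functional n z v s) ` coord_span n z"
  proof
    fix w assume "w \<in> coord_span n (\<lambda>i. z i + l * v i)"
    then obtain c where c: "\<And>i. i \<in> {..<n} \<Longrightarrow> c i \<in> F" "w = (\<Sum>i<n. c i * (z i + l * v i))"
      by (rule F_spanE) blast
    then have "w = (\<Sum>i<n. c i * z i) + l * row_functional n z v (\<Sum>i<n. c i * z i)"
      using row_functional_lincomb[OF assms] by (simp add: lincomb_rank_one_update)
    moreover have "(\<Sum>i<n. c i * z i) \<in> coord_span n z" using c(1) by (intro F_span_lincomb) auto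
    ultimately show "w \<in> (\<lambda>s. s + l * row_functional n z v s) ` coord_span n z" by blast
  qed
  show "(\<lambda>s. s + l * row_functional n z v s) ` coord_span n z \<subseteq> coord_span n (\<lambda>i. z i + l * v i)"
  proof clarify
    fix s assume s: "s \<in> coord_span n z"
    let ?c = "span_coeffs n z s"
    have "s + l * row_functional n z v s = (\<Sum>i<n. ?c i * (z i + l * v i))"
      unfolding lincomb_rank_one_update row_functional_def using span_coeffs(2)[OF s] by simp
    then show "s + l * row_functional n z v s \<in> coord_span n (\<lambda>i. z i + l * v i)"
      using span_coeffs(1)[OF s] F_span_lincomb[of "{..<n}" ?c] by auto
  qed
qed

lemma inj_on_rank_one_update_iff:
  assumes "v \<in> row_space n z"
  shows "inj_on (\<lambda>s. s + l * row_functional n z v s) (coord_span n z)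
    \<longleftrightarrow> \<not> (l \<in> coord_span n z \<and> l \<noteq> 0 \<and> row_functional n z v l = -1)"
proof
  assume inj: "inj_on (\<lambda>s. s + l * row_functional n z v s) (coord_span n z)"
  show "\<not> (l \<in> coord_span n z \<and> l \<noteq> 0 \<and> row_functional n z v l = -1)"
  proof
    assume h: "l \<in> coord_span n z \<and> l \<noteq> 0 \<and> row_functional n z v l = -1"
    have "row_functional n z v 0 = 0"
      using row_functional_diff[OF assms zero_in_coord_span zero_in_coord_span] by simp
    then have "l + l * row_functional n z v l = 0 + l * row_functional n z v 0" using h by simp
    then show False using inj h zero_in_coord_span unfolding inj_on_def by blast
  qed
next
  assume h: "\<not> (l \<in> coord_span n z \<and> l \<noteq> 0 \<and> row_functional n z v l = -1)"
  show "inj_on (\<lambda>s. s + l * row_functional n z v s) (coord_span n z)"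
  proof (rule inj_onI, rule ccontr)
    fix s s' assume s: "s \<in> coord_span n z" "s' \<in> coord_span n z"
      and eq: "s + l * row_functional n z v s = s' + l * row_functional n z v s'" and "s \<noteq> s'"
    let ?d = "s - s'" and ?e = "row_functional n z v (s - s')"
    have d: "?d \<in> coord_span n z" using s by (rule F_subspace_diff[OF F_subspace_F_span])
    have deq: "?d + l * ?e = 0"
      using eq unfolding row_functional_diff[OF assms s] by (simp add: algebra_simps)
    then have en: "?e \<noteq> 0" and lnz: "l \<noteq> 0" using \<open>s \<noteq> s'\<close> by auto
    have "?e \<in> F" using row_functional_in_F[OF row_space_F_vecs[THEN subsetD, OF assms] d] .
    then have cF: "- 1 / ?e \<in> F" by (intro F_divide F_uminus F_one)
    have leq: "l = (- 1 / ?e) * ?d" using deq en by (simp add: field_simps add_eq_0_iff eq_neg_iff_add_eq_0)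
    then have "l \<in> coord_span n z" using F_subspace_smult[OF F_subspace_F_span cF d] by metis
    moreover have "row_functional n z v l = -1"
      using leq row_functional_smult[OF assms d cF] en by simp
    ultimately show False using h lnz by simp
  qed
qed

lemma rk_rank_one_update_not_row_space:
  assumes "v \<notin> row_space n z"
  shows "rk F n (\<lambda>i. z i + l * v i) = (if l \<in> coord_span n z then rk F n z else rk F n z + 1)"
proof (cases "l \<in> coord_span n z")
  case True
  then have "coord_span n (\<lambda>i. z i + l * v i) = coord_span n z"
    using coord_span_rank_one_update_not_row_space[OF assms] subspace_plus_line_eq[OF F_subspace_F_span]
    by simp
  from rk_eqI_coord_span[OF this] show ?thesis using True by simp
next
  case False
  then have "card (coord_span n (\<lambda>i. z i + l * v i)) = q ^ Suc (rk F n z)"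
    using coord_span_rank_one_update_not_row_space[OF assms] card_subspace_plus_line[OF F_subspace_F_span]
      card_coord_span[of n z] by simp
  then show ?thesis using False rk_eq_iff_card by simp
qed

lemma rk_rank_one_update_row_space:
  assumes "v \<in> row_space n z"
  shows "rk F n (\<lambda>i. z i + l * v i) =
    (if l \<in> coord_span n z \<and> l \<noteq> 0 \<and> row_functional n z v l = -1 then rk F n z - 1 else rk F n z)"
proof (cases "l \<in> coord_span n z \<and> l \<noteq> 0 \<and> row_functional n z v l = -1")
  case False
  then have "card (coord_span n (\<lambda>i. z i + l * v i)) = card (coord_span n z)"
    using inj_on_rank_one_update_iff[OF assms] card_image
    by (simp add: coord_span_rank_one_update_row_space[OF assms])
  then have "rk F n (\<lambda>i. z i + l * v i) = rk F n z" using card_coord_span[of n z] rk_eq_iff_card by simp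
  then show ?thesis by (simp only: if_not_P[OF False])
next
  case True
  let ?\<psi> = "\<lambda>s. s + l * row_functional n z v s"
  have "\<not> inj_on ?\<psi> (coord_span n z)" using inj_on_rank_one_update_iff[OF assms] True by simp
  then have "card (?\<psi> ` coord_span n z) \<noteq> card (coord_span n z)"
    using eq_card_imp_inj_on[of "coord_span n z" ?\<psi>] by auto
  moreover have "card (?\<psi> ` coord_span n z) \<le> card (coord_span n z)" by (rule card_image_le) simp
  ultimately have "card (coord_span n (\<lambda>i. z i + l * v i)) < card (coord_span n z)"
    by (simp add: coord_span_rank_one_update_row_space[OF assms])
  then have lt: "rk F n (\<lambda>i. z i + l * v i) < rk F n z" using rk_less_iff_card card_coord_span by simp
  have "rk F n z = rk F n (\<lambda>i. (z i + l * v i) + (- l) * v i)" by (rule rk_cong) simp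
  also have "\<dots> \<le> rk F n (\<lambda>i. z i + l * v i) + rk F n (\<lambda>i. (- l) * v i)" by (rule rk_add)
  also have "\<dots> \<le> rk F n (\<lambda>i. z i + l * v i) + 1" using rk_smult_F_vec_le_1[OF v, of "- l"] by simp
  finally show ?thesis using lt True by simp
qed

end

lemma card_F_linear_equation:
  assumes fI: "finite I" and k: "k \<in> I" and d: "\<forall>i\<in>I. d i \<in> F" and dk: "d k \<noteq> 0" and b: "b \<in> F"
  shows "card {u \<in> I \<rightarrow>\<^sub>E F. (\<Sum>i\<in>I. d i * u i) = b} = q ^ (card I - 1)"
proof -
  define f where "f w = (b - (\<Sum>i\<in>I - {k}. d i * w i)) / d k" for w
  have sumk: "(\<Sum>i\<in>I. d i * u i) = d k * u k + (\<Sum>i\<in>I - {k}. d i * u i)" for u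
    using fI k by (simp add: sum.remove)
  have "{u \<in> I \<rightarrow>\<^sub>E F. (\<Sum>i\<in>I. d i * u i) = b} = (\<lambda>w. w(k := f w)) ` ((I - {k}) \<rightarrow>\<^sub>E F)"
  proof
    show "{u \<in> I \<rightarrow>\<^sub>E F. (\<Sum>i\<in>I. d i * u i) = b} \<subseteq> (\<lambda>w. w(k := f w)) ` ((I - {k}) \<rightarrow>\<^sub>E F)"
    proof clarify
      fix u assume u: "u \<in> I \<rightarrow>\<^sub>E F" "b = (\<Sum>i\<in>I. d i * u i)"
      let ?w = "restrict u (I - {k})"
      have "f ?w = u k" using u(2) sumk[of u] dk unfolding f_def by (simp add: field_simps)
      then have "u = ?w(k := f ?w)" using u(1) k by (auto simp: fun_eq_iff PiE_def extensional_def)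
      moreover have "?w \<in> (I - {k}) \<rightarrow>\<^sub>E F" using u(1) by auto
      ultimately show "u \<in> (\<lambda>w. w(k := f w)) ` ((I - {k}) \<rightarrow>\<^sub>E F)" by blast
    qed
    show "(\<lambda>w. w(k := f w)) ` ((I - {k}) \<rightarrow>\<^sub>E F) \<subseteq> {u \<in> I \<rightarrow>\<^sub>E F. (\<Sum>i\<in>I. d i * u i) = b}"
    proof clarify
      fix w assume w: "w \<in> (I - {k}) \<rightarrow>\<^sub>E F"
      have "f w \<in> F" unfolding f_def using w d b k
        by (intro F_divide F_diff F_sum F_mult) (auto simp: PiE_def Pi_def)
      then have "w(k := f w) \<in> I \<rightarrow>\<^sub>E F" using w k by (auto simp: PiE_def Pi_def extensional_def)
      moreover have "(\<Sum>i\<in>I - {k}. d i * (w(k := f w)) i) = (\<Sum>i\<in>I - {k}. d i * w i)"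
        by (rule sum.cong) auto
      then have "(\<Sum>i\<in>I. d i * (w(k := f w)) i) = b"
        using sumk[of "w(k := f w)"] dk unfolding f_def by simp
      ultimately show "w(k := f w) \<in> I \<rightarrow>\<^sub>E F \<and> (\<Sum>i\<in>I. d i * (w(k := f w)) i) = b" by simp
    qed
  qed
  moreover have "inj_on (\<lambda>w. w(k := f w)) ((I - {k}) \<rightarrow>\<^sub>E F)"
  proof (rule inj_onI)
    fix w w' assume w: "w \<in> (I - {k}) \<rightarrow>\<^sub>E F" "w' \<in> (I - {k}) \<rightarrow>\<^sub>E F" and eq: "w(k := f w) = w'(k := f w')"
    have "w k = undefined" "w' k = undefined" using w by (auto simp: PiE_def extensional_def)
    show "w = w'"
    proof
      fix i show "w i = w' i"
        using fun_cong[OF eq, of i] \<open>w k = undefined\<close> \<open>w' k = undefined\<close> by (cases "i = k") auto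
    qed
  qed
  ultimately have "card {u \<in> I \<rightarrow>\<^sub>E F. (\<Sum>i\<in>I. d i * u i) = b} = card ((I - {k}) \<rightarrow>\<^sub>E F)"
    by (simp add: card_image)
  also have "\<dots> = q ^ (card I - 1)" using fI k by (simp add: card_PiE)
  finally show ?thesis .
qed

lemma sum_lessThan_restrict:
  fixes d w :: "nat \<Rightarrow> 'k"
  assumes "I \<subseteq> {..<n}"
  shows "(\<Sum>i<n. (if i \<in> I then d i else 0) * w i) = (\<Sum>i\<in>I. d i * w i)"
proof -
  have "(\<Sum>i<n. (if i \<in> I then d i else 0) * w i) = (\<Sum>i<n. if i \<in> I then d i * w i else 0)"
    by (intro sum.cong) auto
  also have "{..<n} \<inter> I = I" using assms by blast
  then have "(\<Sum>i<n. if i \<in> I then d i * w i else 0) = (\<Sum>i\<in>I. d i * w i)"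
    by (simp add: sum.If_cases)
  finally show ?thesis .
qed

lemma sum_unit_minus_lincomb:
  fixes a w :: "nat \<Rightarrow> 'k"
  assumes "j < n" "I \<subseteq> {..<n}"
  shows "(\<Sum>i<n. ((if i = j then 1 else 0) - (if i \<in> I then a i else 0)) * w i)
    = w j - (\<Sum>i\<in>I. a i * w i)"
proof -
  have "((if i = j then 1 else 0) - (if i \<in> I then a i else 0)) * w i
      = (if i = j then w i else 0) - (if i \<in> I then a i else 0) * w i" for i
    by (simp add: left_diff_distrib)
  then have "(\<Sum>i<n. ((if i = j then 1 else 0) - (if i \<in> I then a i else 0)) * w i)
      = (\<Sum>i<n. if i = j then w i else 0) - (\<Sum>i<n. (if i \<in> I then a i else 0) * w i)"
    by (simp add: sum_subtractf)
  then show ?thesis using assms sum_lessThan_restrict[OF assms(2), of a w] by simp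
qed

context
  fixes n :: nat and z :: "nat \<Rightarrow> 'k" and I :: "nat set"
  assumes I: "I \<subseteq> {..<n}" "lin_indep_over F z I" "F_span I z = coord_span n z"
begin

lemma finite_basis: "finite I"
  using I(1) finite_subset by blast

definition basis_coeffs :: "nat \<Rightarrow> nat \<Rightarrow> 'k" where
  "basis_coeffs j = (SOME a. (\<forall>i\<in>I. a i \<in> F) \<and> z j = (\<Sum>i\<in>I. a i * z i))"

lemma basis_coeffs:
  assumes "j < n" shows "\<forall>i\<in>I. basis_coeffs j i \<in> F" "z j = (\<Sum>i\<in>I. basis_coeffs j i * z i)"
proof -
  have "z j \<in> F_span I z" using I(3) assms by (simp add: F_span_base)
  then have "\<exists>a. (\<forall>i\<in>I. a i \<in> F) \<and> z j = (\<Sum>i\<in>I. a i * z i)" unfolding F_span_def by blast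
  from someI_ex[OF this] show "\<forall>i\<in>I. basis_coeffs j i \<in> F" "z j = (\<Sum>i\<in>I. basis_coeffs j i * z i)"
    unfolding basis_coeffs_def by blast+
qed

lemma basis_coeffs_basis: assumes "j \<in> I" "k \<in> I" shows "basis_coeffs j k = (if k = j then 1 else 0)"
proof -
  let ?\<delta> = "\<lambda>i. if i = j then 1 else 0"
  have j: "j < n" using assms I(1) by auto
  have "(\<Sum>i\<in>I. ?\<delta> i * z i) = (\<Sum>i\<in>I. if i = j then z i else 0)" by (intro sum.cong) auto
  also have "\<dots> = z j" using assms(1) finite_basis by simp
  finally have "(\<Sum>i\<in>I. ?\<delta> i * z i) = z j" .
  then have "(\<Sum>i\<in>I. (basis_coeffs j i - ?\<delta> i) * z i) = 0"
    using basis_coeffs(2)[OF j] by (simp add: left_diff_distrib sum_subtractf)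
  moreover have "\<forall>i\<in>I. basis_coeffs j i - ?\<delta> i \<in> F" using basis_coeffs(1)[OF j] F_zero F_one F_diff by auto
  ultimately have "basis_coeffs j k - ?\<delta> k = 0"
    using lin_indep_overD[OF I(2), of "\<lambda>i. basis_coeffs j i - ?\<delta> i"] assms(2) by blast
  then show ?thesis by simp
qed

lemma row_space_basis_expansion:
  assumes "v \<in> row_space n z" "j < n" shows "v j = (\<Sum>i\<in>I. basis_coeffs j i * v i)"
proof -
  let ?c = "\<lambda>i. (if i = j then 1 else 0) - (if i \<in> I then basis_coeffs j i else 0)"
  have "\<forall>i<n. ?c i \<in> F" using basis_coeffs(1)[OF assms(2)] F_zero F_one F_diff by auto
  moreover have "(\<Sum>i<n. ?c i * z i) = 0"
    using sum_unit_minus_lincomb[OF assms(2) I(1)] basis_coeffs(2)[OF assms(2)] by simp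
  ultimately have "(\<Sum>i<n. ?c i * v i) = 0" by (rule row_spaceD[OF assms(1)])
  then show ?thesis using sum_unit_minus_lincomb[OF assms(2) I(1)] by simp
qed

lemma row_space_of_basis_values:
  assumes u: "u \<in> I \<rightarrow>\<^sub>E F"
  defines "v \<equiv> restrict (\<lambda>j. \<Sum>i\<in>I. basis_coeffs j i * u i) {..<n}"
  shows "v \<in> row_space n z" "restrict v I = u"
proof -
  have "v \<in> F_vecs n" unfolding v_def F_vecs_def using basis_coeffs(1) u by (auto intro!: F_sum F_mult)
  moreover have "(\<Sum>j<n. c j * v j) = 0" if c: "\<forall>i<n. c i \<in> F" and cz: "(\<Sum>j<n. c j * z j) = 0" for c
  proof -
    let ?a = "\<lambda>i. \<Sum>j<n. c j * basis_coeffs j i"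
    have swap: "(\<Sum>j<n. c j * (\<Sum>i\<in>I. basis_coeffs j i * w i)) = (\<Sum>i\<in>I. ?a i * w i)" for w
      by (simp add: sum_distrib_left sum_distrib_right sum.swap[of _ I] mult.assoc)
    have "(\<Sum>j<n. c j * z j) = (\<Sum>j<n. c j * (\<Sum>i\<in>I. basis_coeffs j i * z i))"
      using basis_coeffs(2) by (intro sum.cong) auto
    then have "(\<Sum>i\<in>I. ?a i * z i) = 0" using cz swap by simp
    moreover have "\<forall>i\<in>I. ?a i \<in> F" using c basis_coeffs(1) by (auto intro!: F_sum F_mult)
    ultimately have "\<forall>i\<in>I. ?a i = 0" using lin_indep_overD[OF I(2), of ?a] by blast
    moreover have "(\<Sum>j<n. c j * v j) = (\<Sum>j<n. c j * (\<Sum>i\<in>I. basis_coeffs j i * u i))"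
      unfolding v_def by (intro sum.cong) auto
    ultimately show ?thesis using swap by simp
  qed
  ultimately show "v \<in> row_space n z" unfolding row_space_def by blast
  show "restrict v I = u"
  proof
    fix i show "restrict v I i = u i"
    proof (cases "i \<in> I")
      case True
      have "(\<Sum>k\<in>I. basis_coeffs i k * u k) = (\<Sum>k\<in>I. if k = i then u k else 0)"
        using basis_coeffs_basis[OF True] by (intro sum.cong) auto
      also have "\<dots> = u i" using True finite_basis by simp
      finally have "(\<Sum>k\<in>I. basis_coeffs i k * u k) = u i" .
      then show ?thesis using True I(1) unfolding v_def by auto
    qed (use u in \<open>simp add: PiE_def extensional_def\<close>)
  qed
qed

lemma bij_betw_row_space_restrict: "bij_betw (\<lambda>v. restrict v I) (row_space n z) (I \<rightarrow>\<^sub>E F)"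
proof (rule bij_betw_imageI)
  show "inj_on (\<lambda>v. restrict v I) (row_space n z)"
  proof (rule inj_onI, rule ext)
    fix v w j assume v: "v \<in> row_space n z" and w: "w \<in> row_space n z" and eq: "restrict v I = restrict w I"
    have vI: "\<forall>i\<in>I. v i = w i" using eq by (metis restrict_apply')
    show "v j = w j"
    proof (cases "j < n")
      case True
      then show ?thesis using row_space_basis_expansion[OF v True] row_space_basis_expansion[OF w True] vI
        by simp
    next
      case False
      have "v \<in> {..<n} \<rightarrow>\<^sub>E F" "w \<in> {..<n} \<rightarrow>\<^sub>E F" using v w row_space_F_vecs unfolding F_vecs_def by auto
      then show ?thesis using False PiE_arb[of v "{..<n}" "\<lambda>_. F" j] PiE_arb[of w "{..<n}" "\<lambda>_. F" j] by simp
    qed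
  qed
  show "(\<lambda>v. restrict v I) ` row_space n z = I \<rightarrow>\<^sub>E F"
  proof
    show "(\<lambda>v. restrict v I) ` row_space n z \<subseteq> I \<rightarrow>\<^sub>E F"
      using row_space_F_vecs I(1) unfolding F_vecs_def by (fastforce simp: PiE_def Pi_def)
    show "I \<rightarrow>\<^sub>E F \<subseteq> (\<lambda>v. restrict v I) ` row_space n z"
    proof
      fix u assume u: "u \<in> I \<rightarrow>\<^sub>E F"
      show "u \<in> (\<lambda>v. restrict v I) ` row_space n z"
        using image_eqI[where f = "\<lambda>v. restrict v I", OF row_space_of_basis_values(2)[OF u, symmetric]
            row_space_of_basis_values(1)[OF u]] .
    qed
  qed
qed

lemma card_row_space_restrict_filter:
  "card {v \<in> row_space n z. P (restrict v I)} = card {u \<in> I \<rightarrow>\<^sub>E F. P u}"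
proof (rule bij_betw_same_card)
  show "bij_betw (\<lambda>v. restrict v I) {v \<in> row_space n z. P (restrict v I)} {u \<in> I \<rightarrow>\<^sub>E F. P u}"
    using bij_betw_row_space_restrict unfolding bij_betw_def inj_on_def by auto
qed

lemma card_row_functional_eq_basis:
  assumes l: "l \<in> coord_span n z" "l \<noteq> 0" and b: "b \<in> F"
  shows "card {v \<in> row_space n z. row_functional n z v l = b} = q ^ (card I - 1)"
proof -
  obtain d where d: "\<And>i. i \<in> I \<Longrightarrow> d i \<in> F" "l = (\<Sum>i\<in>I. d i * z i)"
    using l(1) I(3)[symmetric] by (metis F_spanE)
  let ?c = "\<lambda>i. if i \<in> I then d i else 0"
  have functional: "row_functional n z v l = (\<Sum>i\<in>I. d i * restrict v I i)" if "v \<in> row_space n z" for v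
  proof -
    have "row_functional n z v l = row_functional n z v (\<Sum>i<n. ?c i * z i)"
      using d(2) sum_lessThan_restrict[OF I(1), of d z] by simp
    also have "\<dots> = (\<Sum>i<n. ?c i * v i)" using d(1) F_zero by (intro row_functional_lincomb[OF that]) auto
    finally show ?thesis using sum_lessThan_restrict[OF I(1), of d v] by simp
  qed
  obtain k where k: "k \<in> I" "d k \<noteq> 0" using d(2) l(2) by (metis (no_types, lifting) mult_eq_0_iff sum.neutral)
  have "{v \<in> row_space n z. row_functional n z v l = b}
      = {v \<in> row_space n z. (\<Sum>i\<in>I. d i * restrict v I i) = b}"
    using functional by auto
  also have "card \<dots> = card {u \<in> I \<rightarrow>\<^sub>E F. (\<Sum>i\<in>I. d i * u i) = b}"
    by (rule card_row_space_restrict_filter)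
  also have "\<dots> = q ^ (card I - 1)"
    using d(1) by (intro card_F_linear_equation[of I k d b] finite_basis k b) auto
  finally show ?thesis .
qed

end

lemma card_row_space: "card (row_space n z) = q ^ rk F n z"
proof -
  obtain I where I: "I \<subseteq> {..<n}" "lin_indep_over F z I" "card I = rk F n z"
    using rank_basis_exists by blast
  have "finite I" using I(1) finite_subset by blast
  then show ?thesis using bij_betw_same_card[OF bij_betw_row_space_restrict[OF I(1,2) F_span_rank_basis[OF I]]] I(3)
    by (simp add: card_PiE)
qed

lemma card_row_functional_eq:
  assumes "l \<in> coord_span n z" "l \<noteq> 0" "b \<in> F"
  shows "card {v \<in> row_space n z. row_functional n z v l = b} = q ^ (rk F n z - 1)"
proof -
  obtain I where I: "I \<subseteq> {..<n}" "lin_indep_over F z I" "card I = rk F n z"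
    using rank_basis_exists by blast
  show ?thesis using card_row_functional_eq_basis[OF I(1,2) F_span_rank_basis[OF I] assms] I(3) by simp
qed

definition rank_one_vec :: "nat \<Rightarrow> 'k \<Rightarrow> (nat \<Rightarrow> 'k) \<Rightarrow> nat \<Rightarrow> 'k" where
  "rank_one_vec n l v = restrict (\<lambda>i. l * v i) {..<n}"

lemma rank_one_vec_vecs: "rank_one_vec n l v \<in> vecs n"
  unfolding rank_one_vec_def vecs_def by simp

lemma rk_rank_one_vec_update: "rk F n (\<lambda>i. z i + rank_one_vec n l v i) = rk F n (\<lambda>i. z i + l * v i)"
  by (rule rk_cong) (simp add: rank_one_vec_def)

lemma rk_rank_one_vec: "v \<in> F_vecs n \<Longrightarrow> rk F n (rank_one_vec n l v) \<le> 1"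
  using rk_rank_one_vec_update[of n "\<lambda>_. 0" l v] rk_smult_F_vec_le_1[of v n l] by simp

lemma rank_one_vec_cases:
  assumes e: "e \<in> vecs n" "rk F n e \<le> 1" and j: "j < n" "e j \<noteq> 0"
  obtains v where "v \<in> F_vecs n" "e = rank_one_vec n (e j) v"
proof -
  let ?S = "(\<lambda>t. t * e j) ` F"
  have "e j \<in> coord_span n e" using j by (intro F_span_base) auto
  then have sub: "?S \<subseteq> coord_span n e" by (auto intro: F_subspace_smult[OF F_subspace_F_span])
  have "card ?S = q" using j(2) by (intro card_image) (auto simp: inj_on_def)
  moreover have "card (coord_span n e) \<le> q" using e(2) rk_le_iff_card[of n e 1] by simp
  ultimately have span: "coord_span n e = ?S" using sub by (intro card_seteq[symmetric]) auto
  define v where "v = restrict (\<lambda>i. e i / e j) {..<n}"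
  have "e i / e j \<in> F" if "i \<in> {..<n}" for i
  proof -
    have "e i \<in> coord_span n e" using that by (intro F_span_base) auto
    then obtain t where "t \<in> F" "e i = t * e j" using span by blast
    then show ?thesis using j(2) by simp
  qed
  then have "v \<in> F_vecs n" unfolding v_def F_vecs_def by simp
  moreover have "e = rank_one_vec n (e j) v"
  proof
    fix i show "e i = rank_one_vec n (e j) v i"
    proof (cases "i < n")
      case False then show ?thesis using vecs_outside[OF e(1) False] unfolding rank_one_vec_def by simp
    qed (use j(2) in \<open>simp add: rank_one_vec_def v_def\<close>)
  qed
  ultimately show thesis by (rule that)
qed

lemma rank_one_vec_eq_rescale:
  assumes l0: "l0 \<noteq> 0" and v0: "v0 \<in> F_vecs n" and j: "j < n" "v0 j \<noteq> 0"
    and v: "v \<in> F_vecs n" and eq: "rank_one_vec n l v = rank_one_vec n l0 v0"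
  obtains t where "t \<in> F" "t \<noteq> 0" "l = t * l0" "v = restrict (\<lambda>i. v0 i / t) {..<n}"
proof
  have eqi: "l * v i = l0 * v0 i" if "i < n" for i
    using fun_cong[OF eq, of i] that by (simp add: rank_one_vec_def)
  have vj: "v j \<noteq> 0" using eqi[OF j(1)] l0 j(2) by auto
  show t: "v0 j / v j \<in> F" "v0 j / v j \<noteq> 0" using F_vecsD[OF v0 j(1)] F_vecsD[OF v j(1)] vj j(2)
    by (simp_all add: F_divide)
  show lt: "l = v0 j / v j * l0" using eqi[OF j(1)] vj by (simp add: field_simps)
  show "v = restrict (\<lambda>i. v0 i / (v0 j / v j)) {..<n}"
  proof
    fix i show "v i = restrict (\<lambda>i. v0 i / (v0 j / v j)) {..<n} i"
    proof (cases "i < n")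
      case True
      have "(v0 j / v j) * l0 * v i = l0 * v0 i" using eqi[OF True] lt by simp
      then show ?thesis using True t(2) l0 by (simp add: field_simps)
    next
      case False
      then show ?thesis using v PiE_arb[of v "{..<n}" "\<lambda>_. F" i] unfolding F_vecs_def by simp
    qed
  qed
qed

lemma card_rank_one_vec_fibre:
  assumes l0: "l0 \<noteq> 0" and v0: "v0 \<in> F_vecs n" and j: "j < n" "v0 j \<noteq> 0"
  shows "card {p \<in> UNIV \<times> F_vecs n. rank_one_vec n (fst p) (snd p) = rank_one_vec n l0 v0} = q - 1"
proof -
  define g where "g t = (t * l0, restrict (\<lambda>i. v0 i / t) {..<n})" for t
  have "{p \<in> UNIV \<times> F_vecs n. rank_one_vec n (fst p) (snd p) = rank_one_vec n l0 v0} = g ` (F - {0})"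
  proof
    show "{p \<in> UNIV \<times> F_vecs n. rank_one_vec n (fst p) (snd p) = rank_one_vec n l0 v0} \<subseteq> g ` (F - {0})"
    proof
      fix p assume "p \<in> {p \<in> UNIV \<times> F_vecs n. rank_one_vec n (fst p) (snd p) = rank_one_vec n l0 v0}"
      then obtain l v where p: "p = (l, v)" and v: "v \<in> F_vecs n" and eq: "rank_one_vec n l v = rank_one_vec n l0 v0"
        by (cases p) auto
      obtain t where "t \<in> F" "t \<noteq> 0" "l = t * l0" "v = restrict (\<lambda>i. v0 i / t) {..<n}"
        using rank_one_vec_eq_rescale[OF l0 v0 j v eq] .
      then show "p \<in> g ` (F - {0})" using p unfolding g_def by blast
    qed
    show "g ` (F - {0}) \<subseteq> {p \<in> UNIV \<times> F_vecs n. rank_one_vec n (fst p) (snd p) = rank_one_vec n l0 v0}"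
    proof
      fix x assume "x \<in> g ` (F - {0})"
      then obtain t where t: "t \<in> F" "t \<noteq> 0" and x: "x = g t" by blast
      have "snd (g t) \<in> F_vecs n" unfolding g_def F_vecs_def using F_vecsD[OF v0] t F_divide by auto
      moreover have "rank_one_vec n (fst (g t)) (snd (g t)) = rank_one_vec n l0 v0"
        unfolding g_def rank_one_vec_def using t by (auto simp: fun_eq_iff)
      ultimately show "x \<in> {p \<in> UNIV \<times> F_vecs n. rank_one_vec n (fst p) (snd p) = rank_one_vec n l0 v0}"
        unfolding x by (cases "g t") simp
    qed
  qed
  moreover have "inj_on g (F - {0})" unfolding g_def inj_on_def using l0 by auto
  then have "card (g ` (F - {0})) = q - 1" using F_zero by (simp add: card_image card_Diff_singleton)
  ultimately show ?thesis by simp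
qed

lemma card_rank_one_pairs:
  assumes "\<not> R (rk F n z)"
  shows "card {p \<in> UNIV \<times> F_vecs n. R (rk F n (\<lambda>i. z i + fst p * snd p i))}
       = (q - 1) * card {e \<in> vecs n. rk F n e \<le> 1 \<and> R (rk F n (\<lambda>i. z i + e i))}"
proof -
  let ?S = "{p \<in> UNIV \<times> F_vecs n. R (rk F n (\<lambda>i. z i + fst p * snd p i))}"
  let ?T = "{e \<in> vecs n. rk F n e \<le> 1 \<and> R (rk F n (\<lambda>i. z i + e i))}"
  let ?r1 = "\<lambda>p. rank_one_vec n (fst p) (snd p)"
  have "finite ?S" using finite_F_vecs by (auto intro: finite_subset)
  moreover have "finite ?T" by (rule finite_subset[OF _ finite_vecs]) auto
  moreover have "?r1 ` ?S \<subseteq> ?T"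
    using rank_one_vec_vecs rk_rank_one_vec rk_rank_one_vec_update by auto
  ultimately have "card ?S = (\<Sum>e\<in>?T. card {p\<in>?S. ?r1 p = e})" by (rule card_eq_sum_card_fibres)
  also have "\<dots> = (\<Sum>e\<in>?T. q - 1)"
  proof (rule sum.cong[OF refl])
    fix e assume e: "e \<in> ?T"
    obtain j where j: "j < n" "e j \<noteq> 0"
    proof (rule ccontr)
      assume "\<not> thesis"
      then have "rk F n (\<lambda>i. z i + e i) = rk F n z" using that by (intro rk_cong) auto
      then show False using e assms by simp
    qed
    obtain v0 where v0: "v0 \<in> F_vecs n" "e = rank_one_vec n (e j) v0"
      using rank_one_vec_cases[of e n j] e j by auto
    have "v0 j \<noteq> 0" using j fun_cong[OF v0(2), of j] by (auto simp: rank_one_vec_def)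
    have "{p\<in>?S. ?r1 p = e} = {p \<in> UNIV \<times> F_vecs n. ?r1 p = rank_one_vec n (e j) v0}"
      using e v0(2) rk_rank_one_vec_update by auto
    also have "card \<dots> = q - 1" by (rule card_rank_one_vec_fibre[OF j(2) v0(1) j(1) \<open>v0 j \<noteq> 0\<close>])
    finally show "card {p\<in>?S. ?r1 p = e} = q - 1" .
  qed
  finally show ?thesis by simp
qed

lemma card_rank_one_decrease:
  assumes r: "rk F n z \<ge> 1"
  shows "(q - 1) * card {e \<in> vecs n. rk F n e \<le> 1 \<and> rk F n (\<lambda>i. z i + e i) = rk F n z - 1}
      = (q ^ rk F n z - 1) * q ^ (rk F n z - 1)"
proof -
  let ?r = "rk F n z"
  have key: "rk F n (\<lambda>i. z i + l * v i) = ?r - 1 \<longleftrightarrow>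
      l \<in> coord_span n z - {0} \<and> v \<in> row_space n z \<and> row_functional n z v l = -1"
    if "v \<in> F_vecs n" for l v
  proof (cases "v \<in> row_space n z")
    case True
    then show ?thesis using rk_rank_one_update_row_space[OF that True, of l] r by auto
  next
    case False
    then show ?thesis using rk_rank_one_update_not_row_space[OF that False, of l] r by auto
  qed
  have "{p \<in> UNIV \<times> F_vecs n. rk F n (\<lambda>i. z i + fst p * snd p i) = ?r - 1}
      = (SIGMA l:coord_span n z - {0}. {v \<in> row_space n z. row_functional n z v l = -1})"
  proof (rule set_eqI)
    fix p :: "'k \<times> (nat \<Rightarrow> 'k)"
    obtain l v where p: "p = (l, v)" by (cases p)
    show "p \<in> {p \<in> UNIV \<times> F_vecs n. rk F n (\<lambda>i. z i + fst p * snd p i) = ?r - 1}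
      \<longleftrightarrow> p \<in> (SIGMA l:coord_span n z - {0}. {v \<in> row_space n z. row_functional n z v l = -1})"
      unfolding p using key[of v l] row_space_F_vecs by auto
  qed
  then have "card {p \<in> UNIV \<times> F_vecs n. rk F n (\<lambda>i. z i + fst p * snd p i) = ?r - 1}
      = (\<Sum>l\<in>coord_span n z - {0}. card {v \<in> row_space n z. row_functional n z v l = -1})"
    using finite_subset[OF row_space_F_vecs finite_F_vecs] by simp
  also have "\<dots> = (\<Sum>l\<in>coord_span n z - {0}. q ^ (?r - 1))"
    using card_row_functional_eq F_uminus[OF F_one] by (intro sum.cong) auto
  also have "\<dots> = (q ^ ?r - 1) * q ^ (?r - 1)"
    using card_coord_span[of n z] zero_in_coord_span[of n z] by (simp add: card_Diff_singleton)
  finally show ?thesis using card_rank_one_pairs[of "\<lambda>s. s = ?r - 1" n z] r by simp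
qed

end

context finite_field_extension
begin

lemma card_rank_one_increase:
  "(q - 1) * card {e \<in> vecs n. rk F n e \<le> 1 \<and> rk F n (\<lambda>i. z i + e i) = rk F n z + 1}
      = (q ^ m - q ^ rk F n z) * (q ^ n - q ^ rk F n z)"
proof -
  let ?r = "rk F n z"
  have key: "rk F n (\<lambda>i. z i + l * v i) = ?r + 1 \<longleftrightarrow> l \<notin> coord_span n z \<and> v \<notin> row_space n z"
    if "v \<in> F_vecs n" for l v
  proof (cases "v \<in> row_space n z")
    case True
    then show ?thesis using rk_rank_one_update_row_space[OF that True, of l] by auto
  next
    case False
    then show ?thesis using rk_rank_one_update_not_row_space[OF that False, of l] by auto
  qed
  have "{p \<in> UNIV \<times> F_vecs n. rk F n (\<lambda>i. z i + fst p * snd p i) = ?r + 1}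
      = (UNIV - coord_span n z) \<times> (F_vecs n - row_space n z)"
  proof (rule set_eqI)
    fix p :: "'k \<times> (nat \<Rightarrow> 'k)"
    obtain l v where p: "p = (l, v)" by (cases p)
    show "p \<in> {p \<in> UNIV \<times> F_vecs n. rk F n (\<lambda>i. z i + fst p * snd p i) = ?r + 1}
      \<longleftrightarrow> p \<in> (UNIV - coord_span n z) \<times> (F_vecs n - row_space n z)"
      unfolding p using key[of v l] by auto
  qed
  moreover have "card (UNIV - coord_span n z) = q ^ m - q ^ ?r"
    using card_Diff_subset[of "coord_span n z" UNIV] card_coord_span[of n z] card_UNIV by simp
  moreover have "card (F_vecs n - row_space n z) = q ^ n - q ^ ?r"
    using card_Diff_subset[OF finite_subset[OF row_space_F_vecs finite_F_vecs] row_space_F_vecs]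
      card_row_space card_F_vecs by simp
  ultimately show ?thesis using card_rank_one_pairs[of "\<lambda>s. s = ?r + 1" n z]
    by (simp add: card_cartesian_product)
qed

lemma card_rank_one_increase_real:
  assumes "rk F n w = r" "r \<le> m" "r \<le> n"
  shows "real (card {e \<in> vecs n. rk F n e \<le> 1 \<and> rk F n (\<lambda>i. w i + e i) = r + 1})
     = (real q ^ m - real q ^ r) * (real (gbinom q n 1) - real (gbinom q r 1))"
proof -
  let ?N = "card {e \<in> vecs n. rk F n e \<le> 1 \<and> rk F n (\<lambda>i. w i + e i) = r + 1}"
  have "q ^ r \<le> q ^ m" "q ^ r \<le> q ^ n" "1 \<le> q" using card_F_ge_2 assms by (auto intro: power_increasing)
  then have "(real q - 1) * real ?N = (real q ^ m - real q ^ r) * (real q ^ n - real q ^ r)"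
    using arg_cong[OF card_rank_one_increase[of n w], of real] assms(1) by (simp add: of_nat_diff)
  also have "real q ^ n - real q ^ r = (real q ^ n - 1) - (real q ^ r - 1)" by simp
  also have "\<dots> = (real q - 1) * (real (gbinom q n 1) - real (gbinom q r 1))"
    unfolding gbinom_1_real[OF card_F_ge_2, symmetric] by (simp add: algebra_simps)
  finally show ?thesis using card_F_ge_2 by simp
qed

lemma card_rank_one_decrease_real:
  assumes "rk F n w = r" "1 \<le> r"
  shows "real (card {e \<in> vecs n. rk F n e \<le> 1 \<and> rk F n (\<lambda>i. w i + e i) = r - 1})
     = real q ^ (r - 1) * real (gbinom q r 1)"
proof -
  let ?N = "card {e \<in> vecs n. rk F n e \<le> 1 \<and> rk F n (\<lambda>i. w i + e i) = r - 1}"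
  have "1 \<le> q ^ r" "1 \<le> q" using card_F_ge_2 by auto
  then have "(real q - 1) * real ?N = (real q ^ r - 1) * real q ^ (r - 1)"
    using arg_cong[OF card_rank_one_decrease[of n w], of real] assms by (simp add: of_nat_diff)
  also have "\<dots> = (real q - 1) * (real q ^ (r - 1) * real (gbinom q r 1))"
    unfolding gbinom_1_real[OF card_F_ge_2, symmetric] by (simp add: algebra_simps)
  finally show ?thesis using card_F_ge_2 by simp
qed

lemma V_R_1_real: "real (V_R q m n 1) = 1 + real (gbinom q n 1) * (real q ^ m - 1)"
proof -
  have "N_R q m n 0 = 1" unfolding N_R_def using gbinom_eq_qbinom[OF card_F_ge_2] by (simp add: alpha_def)
  moreover have "N_R q m n 1 = gbinom q n 1 * (q ^ m - 1)" unfolding N_R_def alpha_def by simp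
  moreover have "1 \<le> q ^ m" using card_F_ge_2 by simp
  ultimately show ?thesis unfolding V_R_def by (simp add: of_nat_diff)
qed

end

section \<open>Codes with prescribed covering radius\<close>

lemma rank_cov_radius_covers:
  fixes F :: "'k::{finite,field} set" and C :: "(nat \<Rightarrow> 'k) set" and x :: "nat \<Rightarrow> 'k"
  assumes "C \<subseteq> vecs n" "C \<noteq> {}" "x \<in> vecs n"
  shows "\<exists>c\<in>C. rank_dist F n x c \<le> rank_cov_radius F n C"
proof -
  have "finite C" using assms(1) finite_vecs finite_subset by blast
  let ?D = "{rank_dist F n x c | c. c \<in> C}"
  have "?D = (\<lambda>c. rank_dist F n x c) ` C" by blast
  then have "finite ?D" "?D \<noteq> {}" using \<open>finite C\<close> assms(2) by auto
  from Min_in[OF this] obtain c where c: "c \<in> C" "rank_dist F n x c = Min ?D" by auto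
  have "finite {Min {rank_dist F n y c | c. c \<in> C} | y. y \<in> vecs n}"
    by (simp add: Setcompr_eq_image finite_vecs)
  then have "Min ?D \<le> rank_cov_radius F n C"
    unfolding rank_cov_radius_def by (rule Max_ge) (use assms(3) in blast)
  then show ?thesis using c by (intro bexI[of _ c]) simp_all
qed

lemma rank_cov_radius_eqI:
  fixes F :: "'k::{finite,field} set" and C :: "(nat \<Rightarrow> 'k) set" and x0 :: "nat \<Rightarrow> 'k"
  assumes C: "C \<subseteq> vecs n" "C \<noteq> {}"
    and covers: "\<And>x. x \<in> vecs n \<Longrightarrow> \<exists>c\<in>C. rank_dist F n x c \<le> \<rho>"
    and far: "x0 \<in> vecs n" "\<And>c. c \<in> C \<Longrightarrow> \<rho> \<le> rank_dist F n x0 c"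
  shows "rank_cov_radius F n C = \<rho>"
proof -
  have "finite C" using C(1) finite_vecs finite_subset by blast
  let ?M = "\<lambda>x. Min {rank_dist F n x c | c. c \<in> C}"
  have img: "{rank_dist F n x c | c. c \<in> C} = (\<lambda>c. rank_dist F n x c) ` C" for x by blast
  have fin: "finite {rank_dist F n x c | c. c \<in> C}" "{rank_dist F n x c | c. c \<in> C} \<noteq> {}" for x
    using \<open>finite C\<close> C(2) img by auto
  have le: "?M x \<le> \<rho>" if x: "x \<in> vecs n" for x
  proof -
    obtain c where "c \<in> C" "rank_dist F n x c \<le> \<rho>" using covers[OF x] by blast
    moreover have "?M x \<le> rank_dist F n x c" by (rule Min_le[OF fin(1)]) (use \<open>c \<in> C\<close> in blast)
    ultimately show ?thesis by simp
  qed
  have "?M x0 = \<rho>"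
  proof -
    obtain c where "c \<in> C" "rank_dist F n x0 c = ?M x0" using Min_in[OF fin(1)[of x0] fin(2)[of x0]] by auto
    then show ?thesis using far(2) le[OF far(1)] by fastforce
  qed
  show ?thesis unfolding rank_cov_radius_def
  proof (rule Max_eqI)
    show "finite {?M x | x. x \<in> vecs n}" by (simp add: Setcompr_eq_image finite_vecs)
    show "\<And>y. y \<in> {?M x | x. x \<in> vecs n} \<Longrightarrow> y \<le> \<rho>" using le by blast
    show "\<rho> \<in> {?M x | x. x \<in> vecs n}" using \<open>?M x0 = \<rho>\<close> far(1) by force
  qed
qed

context finite_subfield
begin

lemma lin_indep_over_nonzero:
  assumes "lin_indep_over F y I" "finite I" "i \<in> I" shows "y i \<noteq> 0"
proof
  assume "y i = 0"
  let ?c = "\<lambda>j. if j = i then (1::'k) else 0"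
  have "(\<Sum>j\<in>I. ?c j * y j) = (\<Sum>j\<in>I. if j = i then y j else 0)" by (rule sum.cong) auto
  also have "\<dots> = 0" using assms(2,3) \<open>y i = 0\<close> by simp
  finally have sum0: "(\<Sum>j\<in>I. ?c j * y j) = 0" .
  have "\<forall>j\<in>I. ?c j \<in> F" using F_zero F_one by simp
  from lin_indep_overD[OF assms(1) this sum0 assms(3)] show False by simp
qed

lemma rk_le_card_support:
  assumes "\<And>i. i < n \<Longrightarrow> i \<notin> J \<Longrightarrow> y i = 0"
  shows "rk F n y \<le> card (J \<inter> {..<n})"
proof -
  obtain I where I: "I \<subseteq> {..<n}" "lin_indep_over F y I" "card I = rk F n y"
    using rank_basis_exists by blast
  have "finite I" using I(1) finite_subset by blast
  then have "I \<subseteq> J \<inter> {..<n}" using lin_indep_over_nonzero[OF I(2)] assms I(1) by blast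
  then show ?thesis using I(3) card_mono[of "J \<inter> {..<n}" I] by simp
qed

lemma lin_indep_over_cong:
  "lin_indep_over F x I \<Longrightarrow> (\<And>i. i \<in> I \<Longrightarrow> x i = y i) \<Longrightarrow> lin_indep_over F y I"
  unfolding lin_indep_over_def by (metis (no_types, lifting) sum.cong)

lemma lin_indep_over_extend:
  assumes indep: "lin_indep_over F \<beta> {..<j}" and b: "b \<notin> F_span {..<j} \<beta>"
  shows "lin_indep_over F (\<beta>(j := b)) {..<Suc j}"
  unfolding lin_indep_over_def
proof (intro allI impI)
  fix c assume cF: "\<forall>i\<in>{..<Suc j}. c i \<in> F" and "(\<Sum>i\<in>{..<Suc j}. c i * (\<beta>(j := b)) i) = 0"
  then have sum: "(\<Sum>i<j. c i * \<beta> i) + c j * b = 0" by simp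
  have cj: "c j = 0"
  proof (rule ccontr)
    assume "c j \<noteq> 0"
    have "(\<Sum>i<j. c i * \<beta> i) = - (c j * b)" using sum by (simp add: eq_neg_iff_add_eq_0)
    then have "(\<Sum>i<j. (- c i / c j) * \<beta> i) = b"
      using \<open>c j \<noteq> 0\<close> by (simp add: sum_divide_distrib[symmetric] sum_negf)
    moreover have "(\<Sum>i<j. (- c i / c j) * \<beta> i) \<in> F_span {..<j} \<beta>"
      using cF by (intro F_span_lincomb F_divide F_uminus) auto
    ultimately show False using b by simp
  qed
  then have "\<forall>i\<in>{..<j}. c i = 0" using sum cF lin_indep_overD[OF indep, of c] by auto
  then show "\<forall>i\<in>{..<Suc j}. c i = 0" using cj by (auto simp: less_Suc_eq)
qed

end

context finite_field_extension
begin

lemma lin_indep_family_exists: "j \<le> m \<Longrightarrow> \<exists>\<beta>. lin_indep_over F \<beta> {..<j}"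
proof (induction j)
  case 0 then show ?case by (simp add: lin_indep_over_def)
next
  case (Suc j)
  then obtain \<beta> where \<beta>: "lin_indep_over F \<beta> {..<j}" by auto
  have "card (F_span {..<j} \<beta>) = q ^ j" using card_F_span_indep[OF _ \<beta>] by simp
  also have "\<dots> < card (UNIV :: 'k set)"
    using Suc.prems card_F_ge_2 card_UNIV by (simp add: power_strict_increasing)
  finally obtain b where "b \<notin> F_span {..<j} \<beta>" by (metis UNIV_eq_I less_irrefl)
  then show ?case using lin_indep_over_extend[OF \<beta>] by blast
qed

text \<open>The code of all vectors vanishing on the first \<open>\<rho>\<close> coordinates has covering radius \<open>\<rho>\<close>:
  it is \<open>\<rho>\<close>-close to everything, and a vector whose first \<open>\<rho>\<close> coordinates are \<open>F\<close>-independent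
  is at distance at least \<open>\<rho>\<close> from all of it.\<close>

lemma code_with_rank_cov_radius_exists:
  assumes "\<rho> \<le> n" "\<rho> \<le> m"
  shows "\<exists>C. C \<subseteq> vecs n \<and> C \<noteq> {} \<and> rank_cov_radius F n C = \<rho>"
proof -
  define C :: "(nat \<Rightarrow> 'k) set" where "C = {x \<in> vecs n. \<forall>i<\<rho>. x i = 0}"
  have "restrict (\<lambda>_. 0) {..<n} \<in> C" using assms(1) unfolding C_def vecs_def by auto
  then have "C \<noteq> {}" by blast
  have covers: "\<exists>c\<in>C. rank_dist F n x c \<le> \<rho>" if "x \<in> vecs n" for x
  proof
    show "restrict (\<lambda>i. if i < \<rho> then 0 else x i) {..<n} \<in> C"
      using assms(1) unfolding C_def vecs_def by auto
    have "rank_dist F n x (restrict (\<lambda>i. if i < \<rho> then 0 else x i) {..<n}) \<le> card ({..<\<rho>} \<inter> {..<n})"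
      unfolding rank_dist_def by (rule rk_le_card_support) auto
    also have "\<dots> \<le> \<rho>" by (metis card_lessThan card_mono finite_lessThan inf_le1)
    finally show "rank_dist F n x (restrict (\<lambda>i. if i < \<rho> then 0 else x i) {..<n}) \<le> \<rho>" .
  qed
  obtain \<beta> where \<beta>: "lin_indep_over F \<beta> {..<\<rho>}" using lin_indep_family_exists assms(2) by blast
  have far: "\<rho> \<le> rank_dist F n (restrict \<beta> {..<n}) c" if "c \<in> C" for c
  proof -
    have "lin_indep_over F (\<lambda>i. restrict \<beta> {..<n} i - c i) {..<\<rho>}"
      by (rule lin_indep_over_cong[OF \<beta>]) (use that assms(1) in \<open>auto simp: C_def\<close>)
    then have "card {..<\<rho>} \<le> rk F n (\<lambda>i. restrict \<beta> {..<n} i - c i)"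
      using assms(1) by (intro card_indep_le_rk) auto
    then show ?thesis unfolding rank_dist_def by simp
  qed
  have "rank_cov_radius F n C = \<rho>"
    by (rule rank_cov_radius_eqI[OF _ \<open>C \<noteq> {}\<close> covers _ far]) (auto simp: C_def vecs_def)
  moreover have "C \<subseteq> vecs n" unfolding C_def by blast
  ultimately show ?thesis using \<open>C \<noteq> {}\<close> by blast
qed

lemma K_R_attained:
  assumes "\<rho> \<le> n" "\<rho> \<le> m"
  obtains C where "C \<subseteq> vecs n" "C \<noteq> {}" "card C = K_R F n \<rho>" "rank_cov_radius F n C = \<rho>"
proof -
  let ?P = "\<lambda>k. \<exists>C. C \<subseteq> vecs n \<and> C \<noteq> {} \<and> card C = k \<and> rank_cov_radius F n C = \<rho>"
  obtain C0 where "C0 \<subseteq> vecs n" "C0 \<noteq> {}" "rank_cov_radius F n C0 = \<rho>"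
    using code_with_rank_cov_radius_exists[OF assms] by blast
  then have "?P (card C0)" by blast
  then have "?P (LEAST k. ?P k)" by (rule LeastI)
  then show thesis using that unfolding K_R_def by blast
qed

end

context finite_subfield
begin

definition rank_ball :: "nat \<Rightarrow> (nat \<Rightarrow> 'k) \<Rightarrow> nat \<Rightarrow> (nat \<Rightarrow> 'k) set" where
  "rank_ball n z r = {y \<in> vecs n. rank_dist F n y z \<le> r}"

lemma finite_rank_ball: "finite (rank_ball n z r)"
  unfolding rank_ball_def by (rule finite_subset[OF _ finite_vecs]) auto

lemma rank_ball_filter:
  "{y \<in> rank_ball n z r. P y} = {y \<in> vecs n. rank_dist F n y z \<le> r \<and> P y}"
  unfolding rank_ball_def by blast

lemma rank_ball_commute: "y \<in> rank_ball n z r \<longleftrightarrow> z \<in> rank_ball n y r"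
  if "y \<in> vecs n" "z \<in> vecs n"
  using that rank_dist_commute unfolding rank_ball_def by auto

end

context finite_field_extension
begin

lemma card_rank_ball: "z \<in> vecs n \<Longrightarrow> card (rank_ball n z r) = V_R q m n r"
  unfolding rank_ball_def using card_rank_dist_filter[of z n "\<lambda>d. d \<le> r"] card_rank_le by simp

lemma card_rank_ball_1_sphere_outward:
  assumes "z \<in> vecs n" "rank_dist F n z c = r" "r \<le> m" "r \<le> n"
  shows "real (card {y \<in> rank_ball n z 1. rank_dist F n y c = r + 1})
    = (real q ^ m - real q ^ r) * (real (gbinom q n 1) - real (gbinom q r 1))"
  using card_rank_dist_pair_filter[OF assms(1), of c "r + 1"]
    card_rank_one_increase_real[of n "\<lambda>i. z i - c i" r] assms(2-4)
  by (simp add: rank_ball_filter rank_dist_def)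

lemma card_rank_ball_1_sphere_inward:
  assumes "z \<in> vecs n" "rank_dist F n z c = r" "1 \<le> r"
  shows "real (card {y \<in> rank_ball n z 1. rank_dist F n y c = r - 1}) = real q ^ (r - 1) * real (gbinom q r 1)"
  using card_rank_dist_pair_filter[OF assms(1), of c "r - 1"]
    card_rank_one_decrease_real[of n "\<lambda>i. z i - c i" r] assms(2,3)
  by (simp add: rank_ball_filter rank_dist_def)

lemma card_rank_ball_1_within:
  assumes "z \<in> vecs n" "rank_dist F n z c = r" "r \<le> m" "r \<le> n"
  shows "real (card {y \<in> rank_ball n z 1. rank_dist F n y c \<le> r})
    = real (V_R q m n 1) - (real q ^ m - real q ^ r) * (real (gbinom q n 1) - real (gbinom q r 1))"
proof -
  have "rank_dist F n y c \<le> r + 1" if "y \<in> rank_ball n z 1" for y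
    using rank_dist_triangle[of n y c z] that assms(2) unfolding rank_ball_def by simp
  then have "rank_ball n z 1
      = {y \<in> rank_ball n z 1. rank_dist F n y c \<le> r} \<union> {y \<in> rank_ball n z 1. rank_dist F n y c = r + 1}"
    by fastforce
  then have "card (rank_ball n z 1)
      = card {y \<in> rank_ball n z 1. rank_dist F n y c \<le> r} + card {y \<in> rank_ball n z 1. rank_dist F n y c = r + 1}"
    by (subst card_Un_disjoint[symmetric]) (auto intro: finite_subset[OF _ finite_rank_ball])
  then show ?thesis using card_rank_ball[OF assms(1)] card_rank_ball_1_sphere_outward[OF assms] by simp
qed

lemma card_rank_ball_1_within_far:
  assumes "z \<in> vecs n" "rank_dist F n z c = r + 1"
  shows "real (card {y \<in> rank_ball n z 1. rank_dist F n y c \<le> r}) = real q ^ r * real (gbinom q (r + 1) 1)"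
proof -
  have "r \<le> rank_dist F n y c" if "y \<in> rank_ball n z 1" for y
    using rank_dist_triangle[of n z c y] rank_dist_commute[of n z y] that assms(2)
    unfolding rank_ball_def by simp
  then have "{y \<in> rank_ball n z 1. rank_dist F n y c \<le> r} = {y \<in> rank_ball n z 1. rank_dist F n y c = r + 1 - 1}"
    by fastforce
  then show ?thesis using card_rank_ball_1_sphere_inward[OF assms(1,2)] by simp
qed

end

section \<open>The excess counting argument\<close>

lemma ceiling_mult_le:
  fixes a b :: real
  assumes "0 < b" "a \<le> real k * b"
  shows "of_int \<lceil>a / b\<rceil> * b \<le> real k * b"
proof -
  have "\<lceil>a / b\<rceil> \<le> int k" using assms by (simp add: ceiling_le_iff divide_le_eq)
  then show ?thesis using assms(1) by (simp add: mult_right_mono)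
qed

locale rank_covering_code = finite_field_extension F m for F :: "'k::{finite,field} set" and m :: nat +
  fixes n \<rho> :: nat and C :: "(nat \<Rightarrow> 'k) set"
  assumes n_le_m: "n \<le> m" and rho_pos: "0 < \<rho>" and rho_less_n: "\<rho> < n"
    and code_vecs: "C \<subseteq> vecs n"
    and covers: "\<And>x. x \<in> vecs n \<Longrightarrow> \<exists>c\<in>C. rank_dist F n x c \<le> \<rho>"
begin

definition coverage :: "(nat \<Rightarrow> 'k) \<Rightarrow> nat" where
  "coverage x = card {c \<in> C. rank_dist F n x c \<le> \<rho>}"

definition excess :: "(nat \<Rightarrow> 'k) \<Rightarrow> real" where
  "excess x = real (coverage x) - 1"

definition singly_covered_boundary :: "(nat \<Rightarrow> 'k) set" where
  "singly_covered_boundary = {z \<in> vecs n. coverage z = 1 \<and> (\<exists>c\<in>C. rank_dist F n z c = \<rho>)}"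

lemma rho_le_n: "\<rho> \<le> n" and rho_le_m: "\<rho> \<le> m"
  using rho_less_n n_le_m by simp_all

lemma finite_code: "finite C"
  using code_vecs finite_vecs finite_subset by blast

lemma coverage_pos:
  assumes "x \<in> vecs n" shows "1 \<le> coverage x"
proof -
  have "{c \<in> C. rank_dist F n x c \<le> \<rho>} \<noteq> {}" using covers[OF assms] by blast
  then show ?thesis unfolding coverage_def using finite_code by (simp add: Suc_leI card_gt_0_iff)
qed

lemma coverage_1_unique:
  assumes "coverage z = 1" "c \<in> C" "rank_dist F n z c \<le> \<rho>" "c' \<in> C" "rank_dist F n z c' \<le> \<rho>"
  shows "c = c'"
proof -
  obtain a where a: "{c \<in> C. rank_dist F n z c \<le> \<rho>} = {a}"
    using assms(1) card_1_singletonE unfolding coverage_def by blast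
  have "c \<in> {c \<in> C. rank_dist F n z c \<le> \<rho>}" "c' \<in> {c \<in> C. rank_dist F n z c \<le> \<rho>}"
    using assms(2-5) by auto
  then show ?thesis unfolding a by simp
qed

lemma sum_excess: "(\<Sum>x\<in>vecs n. excess x) = real (card C) * real (V_R q m n \<rho>) - real q ^ (m * n)"
proof -
  have "(\<Sum>x\<in>vecs n. coverage x) = (\<Sum>c\<in>C. card {x \<in> vecs n. rank_dist F n x c \<le> \<rho>})"
    unfolding coverage_def by (rule sum_multicount_gen[OF finite_vecs finite_code]) simp
  also have "\<dots> = card C * V_R q m n \<rho>"
    using card_rank_ball code_vecs by (simp add: rank_ball_def subset_iff)
  moreover have "(\<Sum>x\<in>vecs n. excess x) = real (\<Sum>x\<in>vecs n. coverage x) - real (card (vecs n :: (nat \<Rightarrow> 'k) set))"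
    by (simp add: excess_def sum_subtractf)
  moreover have "card (vecs n :: (nat \<Rightarrow> 'k) set) = card (UNIV :: 'k set) ^ n" by (rule card_vecs)
  then have "card (vecs n :: (nat \<Rightarrow> 'k) set) = q ^ (m * n)" by (simp add: card_UNIV power_mult)
  ultimately show ?thesis by simp
qed

lemma card_code_sphere_le:
  assumes "x \<in> vecs n"
  shows "real (card {c \<in> C. rank_dist F n x c = \<rho>})
    \<le> (if x \<in> singly_covered_boundary then 1 else 0) + 2 * excess x"
proof -
  have le: "card {c \<in> C. rank_dist F n x c = \<rho>} \<le> coverage x"
    unfolding coverage_def by (rule card_mono) (use finite_code in auto)
  show ?thesis
  proof (cases "coverage x = 1")
    case True
    show ?thesis
    proof (cases "{c \<in> C. rank_dist F n x c = \<rho>} = {}")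
      case False
      then have "x \<in> singly_covered_boundary"
        using True assms unfolding singly_covered_boundary_def by blast
      then show ?thesis using le True by (simp add: excess_def)
    next
      case empty: True
      show ?thesis unfolding empty using \<open>coverage x = 1\<close> by (simp add: excess_def)
    qed
  next
    case False
    then show ?thesis using le coverage_pos[OF assms] by (simp add: excess_def)
  qed
qed

lemma code_sphere_count_le:
  "real (card C) * real (N_R q m n \<rho>) \<le> real (card singly_covered_boundary) + 2 * (\<Sum>x\<in>vecs n. excess x)"
proof -
  have "card C * N_R q m n \<rho> = (\<Sum>c\<in>C. card {x \<in> vecs n. rank_dist F n x c = \<rho>})"
    using card_rank_dist_filter[of _ n "\<lambda>d. d = \<rho>"] card_rank_eq code_vecs by (simp add: subset_iff)
  also have "\<dots> = (\<Sum>x\<in>vecs n. card {c \<in> C. rank_dist F n x c = \<rho>})"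
    by (rule sum_multicount_gen[OF finite_code finite_vecs]) simp
  finally have "real (card C) * real (N_R q m n \<rho>) = (\<Sum>x\<in>vecs n. real (card {c \<in> C. rank_dist F n x c = \<rho>}))"
    by (simp only: of_nat_mult[symmetric] of_nat_sum[symmetric])
  also have "\<dots> \<le> (\<Sum>x\<in>vecs n. (if x \<in> singly_covered_boundary then 1 else 0) + 2 * excess x)"
    by (rule sum_mono) (rule card_code_sphere_le)
  also have "\<dots> = real (card singly_covered_boundary) + 2 * (\<Sum>x\<in>vecs n. excess x)"
  proof -
    have "vecs n \<inter> singly_covered_boundary = singly_covered_boundary"
      unfolding singly_covered_boundary_def by blast
    then have "(\<Sum>x\<in>vecs n. if x \<in> singly_covered_boundary then 1 else 0) = real (card singly_covered_boundary)"
      using sum.inter_restrict[OF finite_vecs[of n], of "\<lambda>_. 1::real" singly_covered_boundary] by simp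
    then show ?thesis by (simp add: sum.distrib sum_distrib_left)
  qed
  finally show ?thesis .
qed

lemma singly_covered_boundaryE:
  assumes "z \<in> singly_covered_boundary"
  obtains c0 where "z \<in> vecs n" "coverage z = 1" "c0 \<in> C" "rank_dist F n z c0 = \<rho>"
  using assms unfolding singly_covered_boundary_def by blast

context
  fixes z c0 :: "nat \<Rightarrow> 'k"
  assumes z: "z \<in> singly_covered_boundary" and c0: "c0 \<in> C" "rank_dist F n z c0 = \<rho>"
begin

definition other_near_codewords :: "(nat \<Rightarrow> 'k) set" where
  "other_near_codewords = {c \<in> C - {c0}. \<exists>y\<in>rank_ball n z 1. rank_dist F n y c \<le> \<rho>}"

lemma z_in_vecs: "z \<in> vecs n"
  using z unfolding singly_covered_boundary_def by blast

lemma card_other_codeword_near: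
  assumes "c \<in> other_near_codewords"
  shows "real (card {y \<in> rank_ball n z 1. rank_dist F n y c \<le> \<rho>}) = real q ^ \<rho> * real (gbinom q (\<rho> + 1) 1)"
proof -
  obtain y where c: "c \<in> C" "c \<noteq> c0" and y: "y \<in> rank_ball n z 1" "rank_dist F n y c \<le> \<rho>"
    using assms unfolding other_near_codewords_def by blast
  have "rank_dist F n z c \<le> \<rho> + 1"
    using rank_dist_triangle[of n z c y] rank_dist_commute[of n z y] y unfolding rank_ball_def by simp
  moreover have "\<not> rank_dist F n z c \<le> \<rho>"
    using coverage_1_unique[of z c0 c] z c0 c unfolding singly_covered_boundary_def by auto
  ultimately show ?thesis using card_rank_ball_1_within_far[OF z_in_vecs] by simp
qed

lemma sum_other_codewords_near:
  "real (\<Sum>c\<in>other_near_codewords. card {y \<in> rank_ball n z 1. rank_dist F n y c \<le> \<rho>})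
    = real (card other_near_codewords) * (real q ^ \<rho> * real (gbinom q (\<rho> + 1) 1))"
  using card_other_codeword_near by simp

lemma outer_shell_bound:
  "(real q ^ m - real q ^ \<rho>) * (real (gbinom q n 1) - real (gbinom q \<rho> 1))
    \<le> real (card other_near_codewords) * (real q ^ \<rho> * real (gbinom q (\<rho> + 1) 1))"
proof -
  let ?shell = "{y \<in> rank_ball n z 1. rank_dist F n y c0 = \<rho> + 1}"
  have "?shell \<subseteq> (\<Union>c\<in>other_near_codewords. {y \<in> rank_ball n z 1. rank_dist F n y c \<le> \<rho>})"
  proof
    fix y assume y: "y \<in> ?shell"
    then obtain c where "c \<in> C" "rank_dist F n y c \<le> \<rho>" using covers unfolding rank_ball_def by blast
    moreover have "c \<noteq> c0" using calculation y by auto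
    ultimately show "y \<in> (\<Union>c\<in>other_near_codewords. {y \<in> rank_ball n z 1. rank_dist F n y c \<le> \<rho>})"
      using y unfolding other_near_codewords_def by blast
  qed
  moreover have "finite (\<Union>c\<in>other_near_codewords. {y \<in> rank_ball n z 1. rank_dist F n y c \<le> \<rho>})"
    by (rule finite_subset[OF _ finite_rank_ball[of n z 1]]) blast
  ultimately have "card ?shell \<le> card (\<Union>c\<in>other_near_codewords. {y \<in> rank_ball n z 1. rank_dist F n y c \<le> \<rho>})"
    by (simp add: card_mono)
  also have "\<dots> \<le> (\<Sum>c\<in>other_near_codewords. card {y \<in> rank_ball n z 1. rank_dist F n y c \<le> \<rho>})"
    by (rule card_UN_le) (simp add: other_near_codewords_def finite_code)
  finally have "real (card ?shell)
      \<le> real (\<Sum>c\<in>other_near_codewords. card {y \<in> rank_ball n z 1. rank_dist F n y c \<le> \<rho>})"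
    by (simp only: of_nat_le_iff)
  then show ?thesis
    using card_rank_ball_1_sphere_outward[OF z_in_vecs c0(2) rho_le_m rho_le_n] sum_other_codewords_near by simp
qed

lemma local_excess_eq:
  "(\<Sum>y\<in>rank_ball n z 1. excess y)
    = real (card other_near_codewords) * (real q ^ \<rho> * real (gbinom q (\<rho> + 1) 1))
      - (real q ^ m - real q ^ \<rho>) * (real (gbinom q n 1) - real (gbinom q \<rho> 1))"
proof -
  let ?K = "\<lambda>c. card {y \<in> rank_ball n z 1. rank_dist F n y c \<le> \<rho>}"
  have "(\<Sum>y\<in>rank_ball n z 1. coverage y) = (\<Sum>c\<in>C. ?K c)"
    unfolding coverage_def by (rule sum_multicount_gen[OF finite_rank_ball finite_code]) simp
  also have "\<dots> = ?K c0 + (\<Sum>c\<in>C - {c0}. ?K c)" using finite_code c0(1) by (simp add: sum.remove)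
  also have "(\<Sum>c\<in>C - {c0}. ?K c) = (\<Sum>c\<in>other_near_codewords. ?K c)"
    unfolding other_near_codewords_def
    by (rule sum.mono_neutral_right) (auto simp: finite_code card_gt_0_iff finite_rank_ball)
  finally have cov: "(\<Sum>y\<in>rank_ball n z 1. coverage y) = ?K c0 + (\<Sum>c\<in>other_near_codewords. ?K c)" .
  have "(\<Sum>y\<in>rank_ball n z 1. excess y) = real (\<Sum>y\<in>rank_ball n z 1. coverage y) - real (card (rank_ball n z 1))"
    by (simp add: excess_def sum_subtractf)
  also have "\<dots> = real (?K c0) + real (\<Sum>c\<in>other_near_codewords. ?K c) - real (V_R q m n 1)"
    unfolding cov card_rank_ball[OF z_in_vecs] of_nat_add ..
  finally have "(\<Sum>y\<in>rank_ball n z 1. excess y)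
      = real (?K c0) + real (\<Sum>c\<in>other_near_codewords. ?K c) - real (V_R q m n 1)" .
  then show ?thesis
    using card_rank_ball_1_within[OF z_in_vecs c0(2) rho_le_m rho_le_n] sum_other_codewords_near by simp
qed

lemma eps8_le_local_excess: "eps8 q m n \<rho> \<le> (\<Sum>y\<in>rank_ball n z 1. excess y)"
proof -
  let ?A = "(real q ^ m - real q ^ \<rho>) * (real (gbinom q n 1) - real (gbinom q \<rho> 1))"
  let ?B = "real q ^ \<rho> * real (gbinom q (\<rho> + 1) 1)"
  have "0 < ?B" using gbinom_1_pos[OF card_F_ge_2, of "\<rho> + 1"] card_F_ge_2 by simp
  have "eps8 q m n \<rho> = of_int \<lceil>?A / ?B\<rceil> * ?B - ?A" unfolding eps8_def by (simp add: algebra_simps)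
  also have "\<dots> \<le> real (card other_near_codewords) * ?B - ?A"
    using ceiling_mult_le[OF \<open>0 < ?B\<close> outer_shell_bound] by simp
  finally show ?thesis using local_excess_eq by simp
qed

end

lemma ball_bound_nonneg: "0 \<le> real (V_R q m n 1) - real q ^ (\<rho> - 1) * real (gbinom q \<rho> 1) - 1"
proof -
  have "real (gbinom q \<rho> 1) \<le> real (gbinom q n 1)"
    using qbinom_1_mono[of q \<rho> n] rho_le_n card_F_ge_2 gbinom_eq_qbinom[OF card_F_ge_2] by simp
  moreover have "real q ^ (\<rho> - 1) \<le> real q ^ m - 1"
  proof -
    have "q ^ (\<rho> - 1) * 2 \<le> q ^ (\<rho> - 1) * q" using card_F_ge_2 by simp
    also have "\<dots> = q ^ \<rho>" using rho_pos by (cases \<rho>) auto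
    also have "\<dots> \<le> q ^ m" using rho_le_m card_F_ge_2 by (intro power_increasing) auto
    finally have "real (q ^ (\<rho> - 1) * 2) \<le> real (q ^ m)" by (simp only: of_nat_le_iff)
    then have "real q ^ (\<rho> - 1) * 2 \<le> real q ^ m" by simp
    moreover have "1 \<le> real q ^ (\<rho> - 1)" using card_F_ge_2 by simp
    ultimately show ?thesis by linarith
  qed
  moreover have "0 \<le> real q ^ (\<rho> - 1)" "1 \<le> real q ^ m" using card_F_ge_2 by simp_all
  ultimately have "real q ^ (\<rho> - 1) * real (gbinom q \<rho> 1) \<le> (real q ^ m - 1) * real (gbinom q n 1)"
    by (intro mult_mono) auto
  then show ?thesis unfolding V_R_1_real by (simp add: algebra_simps)
qed

lemma near_singly_covered_empty:
  assumes y: "y \<in> vecs n" "2 \<le> coverage y" and not_sphere: "\<forall>c\<in>C. rank_dist F n y c \<noteq> \<rho>"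
  shows "singly_covered_boundary \<inter> rank_ball n y 1 = {}"
proof (rule ccontr)
  assume "singly_covered_boundary \<inter> rank_ball n y 1 \<noteq> {}"
  then obtain z where z: "z \<in> singly_covered_boundary" "rank_dist F n z y \<le> 1"
    unfolding rank_ball_def by blast
  let ?S = "{c \<in> C. rank_dist F n y c \<le> \<rho>}"
  have "?S \<subseteq> {c \<in> C. rank_dist F n z c \<le> \<rho>}"
  proof clarify
    fix c assume "c \<in> C" "rank_dist F n y c \<le> \<rho>"
    then have "rank_dist F n y c \<le> \<rho> - 1" using not_sphere by fastforce
    then show "rank_dist F n z c \<le> \<rho>" using rank_dist_triangle[of n z c y] z(2) rho_pos by simp
  qed
  then have "coverage y \<le> coverage z" unfolding coverage_def by (rule card_mono[rotated]) (simp add: finite_code)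
  then show False using y(2) z(1) unfolding singly_covered_boundary_def by simp
qed

lemma card_near_singly_covered_on_sphere:
  assumes y: "y \<in> vecs n" "2 \<le> coverage y" and c: "c \<in> C" "rank_dist F n y c = \<rho>"
  shows "real (card (singly_covered_boundary \<inter> rank_ball n y 1))
    \<le> real (V_R q m n 1) - real q ^ (\<rho> - 1) * real (gbinom q \<rho> 1) - 1"
proof -
  let ?T = "{z \<in> rank_ball n y 1. rank_dist F n z c = \<rho> - 1}"
  have "y \<in> rank_ball n y 1" "y \<notin> ?T" using y(1) c(2) rho_pos by (simp_all add: rank_ball_def rank_dist_self)
  then have Ty: "insert y ?T \<subseteq> rank_ball n y 1" "card (insert y ?T) = card ?T + 1"
    using finite_subset[OF _ finite_rank_ball[of n y 1]] by auto
  have "singly_covered_boundary \<inter> rank_ball n y 1 \<subseteq> rank_ball n y 1 - insert y ?T"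
  proof
    fix z assume "z \<in> singly_covered_boundary \<inter> rank_ball n y 1"
    then have z: "z \<in> singly_covered_boundary" "z \<in> rank_ball n y 1" by auto
    then obtain c0 where cz: "coverage z = 1" and c0: "c0 \<in> C" "rank_dist F n z c0 = \<rho>"
      by (elim singly_covered_boundaryE)
    have "z \<noteq> y" using cz y(2) by auto
    moreover have "z \<notin> ?T"
    proof
      assume "z \<in> ?T"
      then have "rank_dist F n z c = \<rho> - 1" by simp
      moreover from this have "c = c0" using coverage_1_unique[OF cz c(1) _ c0(1)] c0(2) by simp
      ultimately show False using c0(2) rho_pos by simp
    qed
    ultimately show "z \<in> rank_ball n y 1 - insert y ?T" using z(2) by simp
  qed
  then have "card (singly_covered_boundary \<inter> rank_ball n y 1) \<le> card (rank_ball n y 1 - insert y ?T)"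
    by (intro card_mono) (simp_all add: finite_rank_ball)
  also have "\<dots> = card (rank_ball n y 1) - card (insert y ?T)"
    by (rule card_Diff_subset[OF finite_subset[OF Ty(1) finite_rank_ball] Ty(1)])
  finally have "card (singly_covered_boundary \<inter> rank_ball n y 1) + card ?T + 1 \<le> card (rank_ball n y 1)"
    using card_mono[OF finite_rank_ball Ty(1)] Ty(2) by linarith
  then show ?thesis using card_rank_ball[OF y(1), of 1] card_rank_ball_1_sphere_inward[OF y(1) c(2)] rho_pos
    by (simp add: Suc_leI)
qed

lemma card_near_singly_covered_le:
  assumes "y \<in> vecs n" "2 \<le> coverage y"
  shows "real (card (singly_covered_boundary \<inter> rank_ball n y 1))
    \<le> real (V_R q m n 1) - real q ^ (\<rho> - 1) * real (gbinom q \<rho> 1) - 1"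
proof (cases "\<exists>c\<in>C. rank_dist F n y c = \<rho>")
  case True
  then show ?thesis using card_near_singly_covered_on_sphere[OF assms] by blast
next
  case False
  then show ?thesis using near_singly_covered_empty[OF assms] ball_bound_nonneg by simp
qed

lemma sum_local_excess_le:
  "(\<Sum>z\<in>singly_covered_boundary. \<Sum>y\<in>rank_ball n z 1. excess y)
    \<le> (real (V_R q m n 1) - real q ^ (\<rho> - 1) * real (gbinom q \<rho> 1) - 1) * (\<Sum>y\<in>vecs n. excess y)"
proof -
  let ?Z = "singly_covered_boundary" and ?D = "real (V_R q m n 1) - real q ^ (\<rho> - 1) * real (gbinom q \<rho> 1) - 1"
  have Z: "?Z \<subseteq> vecs n" unfolding singly_covered_boundary_def by blast
  then have "finite ?Z" using finite_subset[OF _ finite_vecs] by blast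
  have inner: "(\<Sum>y\<in>rank_ball n z 1. excess y) = (\<Sum>y\<in>vecs n. if y \<in> rank_ball n z 1 then excess y else 0)"
    for z
  proof -
    have "vecs n \<inter> rank_ball n z 1 = rank_ball n z 1" unfolding rank_ball_def by blast
    then show ?thesis using sum.inter_restrict[OF finite_vecs[of n], of excess "rank_ball n z 1"] by simp
  qed
  have "(\<Sum>z\<in>?Z. \<Sum>y\<in>rank_ball n z 1. excess y)
      = (\<Sum>y\<in>vecs n. \<Sum>z\<in>?Z. if y \<in> rank_ball n z 1 then excess y else 0)"
    unfolding inner by (rule sum.swap)
  also have "\<dots> = (\<Sum>y\<in>vecs n. \<Sum>z\<in>?Z. if z \<in> rank_ball n y 1 then excess y else 0)"
  proof (intro sum.cong refl)
    fix y z :: "nat \<Rightarrow> 'k" assume "y \<in> vecs n" "z \<in> ?Z"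
    then show "(if y \<in> rank_ball n z 1 then excess y else 0) = (if z \<in> rank_ball n y 1 then excess y else 0)"
      using rank_ball_commute[of y n z 1] Z by auto
  qed
  also have "\<dots> = (\<Sum>y\<in>vecs n. excess y * real (card (?Z \<inter> rank_ball n y 1)))"
  proof (intro sum.cong refl)
    fix y
    show "(\<Sum>z\<in>?Z. if z \<in> rank_ball n y 1 then excess y else 0) = excess y * real (card (?Z \<inter> rank_ball n y 1))"
      using sum.inter_restrict[OF \<open>finite ?Z\<close>, of "\<lambda>_. excess y" "rank_ball n y 1"]
      by (simp add: mult.commute)
  qed
  also have "\<dots> \<le> (\<Sum>y\<in>vecs n. excess y * ?D)"
  proof (rule sum_mono)
    fix y :: "nat \<Rightarrow> 'k" assume y: "y \<in> vecs n"
    show "excess y * real (card (?Z \<inter> rank_ball n y 1)) \<le> excess y * ?D"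
    proof (cases "coverage y = 1")
      case False
      then have "2 \<le> coverage y" using coverage_pos[OF y] by simp
      then show ?thesis using card_near_singly_covered_le[OF y] coverage_pos[OF y]
        by (intro mult_left_mono) (auto simp: excess_def)
    qed (simp add: excess_def)
  qed
  finally show ?thesis by (simp add: sum_distrib_right mult.commute)
qed

lemma covering_excess_bound:
  assumes eps: "0 < eps8 q m n \<rho>"
  shows "real q ^ (m * n)
    \<le> real (card C) * (real (V_R q m n \<rho>) - eps8 q m n \<rho> / delta8 q m n \<rho> * real (N_R q m n \<rho>))"
proof -
  let ?E = "\<Sum>x\<in>vecs n. excess x" and ?Z = "singly_covered_boundary" and ?\<epsilon> = "eps8 q m n \<rho>"
  have "?\<epsilon> * real (card ?Z) = (\<Sum>z\<in>?Z. ?\<epsilon>)" by simp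
  also have "\<dots> \<le> (\<Sum>z\<in>?Z. \<Sum>y\<in>rank_ball n z 1. excess y)"
    by (rule sum_mono) (metis singly_covered_boundaryE eps8_le_local_excess)
  also have "\<dots> \<le> (delta8 q m n \<rho> - 2 * ?\<epsilon>) * ?E"
    using sum_local_excess_le unfolding delta8_def by simp
  finally have "?\<epsilon> * (real (card C) * real (N_R q m n \<rho>)) \<le> delta8 q m n \<rho> * ?E"
    using mult_left_mono[OF code_sphere_count_le, of ?\<epsilon>] eps by (simp add: algebra_simps)
  moreover have "0 < delta8 q m n \<rho>" using ball_bound_nonneg eps unfolding delta8_def by simp
  ultimately have "?\<epsilon> / delta8 q m n \<rho> * (real (card C) * real (N_R q m n \<rho>)) \<le> ?E"
    by (simp add: divide_le_eq mult.commute mult.left_commute)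
  then show ?thesis unfolding sum_excess by (simp add: algebra_simps)
qed

end

theorem proposition8:
  fixes F :: "'k::{finite,field} set" and q m n \<rho> :: nat
  assumes "is_subfield F" and "card F = q" and "card (UNIV :: 'k set) = q ^ m"
    and "n \<le> m" and "0 < \<rho>" and "\<rho> < n"
    and "eps8 q m n \<rho> > 0"
  shows "real_of_int \<lceil>real q ^ (m * n) /
            (real (V_R q m n \<rho>) - eps8 q m n \<rho> / delta8 q m n \<rho> * real (N_R q m n \<rho>))\<rceil>
         \<le> real (K_R F n \<rho>)"
proof -
  interpret finite_field_extension F m
    using assms(1-3) by unfold_locales simp_all
  have "\<rho> \<le> n" "\<rho> \<le> m" using assms(4,6) by simp_all
  then obtain C where C: "C \<subseteq> vecs n" "C \<noteq> {}" "card C = K_R F n \<rho>" "rank_cov_radius F n C = \<rho>"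
    by (rule K_R_attained)
  have "\<And>x. x \<in> vecs n \<Longrightarrow> \<exists>c\<in>C. rank_dist F n x c \<le> \<rho>"
    using rank_cov_radius_covers[where F = F, OF C(1,2)] C(4) by simp
  then interpret rank_covering_code F m n \<rho> C
    using assms(4-6) C(1) by unfold_locales
  define D where "D = real (V_R q m n \<rho>) - eps8 q m n \<rho> / delta8 q m n \<rho> * real (N_R q m n \<rho>)"
  have bound: "real q ^ (m * n) \<le> real (K_R F n \<rho>) * D"
    using covering_excess_bound assms(7) unfolding D_def assms(2) C(3) .
  moreover have "0 < real q ^ (m * n)" using card_F_ge_2 assms(2) by simp
  ultimately have "0 < D" using mult_nonneg_nonpos[of "real (K_R F n \<rho>)" D] by fastforce
  then have "real q ^ (m * n) / D \<le> real (K_R F n \<rho>)" using bound by (simp add: divide_le_eq)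
  then have "\<lceil>real q ^ (m * n) / D\<rceil> \<le> int (K_R F n \<rho>)" by (simp add: ceiling_le_iff)
  then show ?thesis unfolding D_def[symmetric] by (metis of_int_le_iff of_int_of_nat_eq)
qed

end
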